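(* Let $p,q$ be distinct prime numbers and let $G=\langle a,s,t \mid sas^{-1}=a^p,\ tat^{-1}=a^q\rangle$. Then the following subsets are equationally definable in $G$: (1) $\mathrm{Mon}\langle s\rangle$ and $\mathrm{Mon}\langle t\rangle$; (2) $\{(g,t^i) \mid i\in\mathbb{Z}_{\geq 0},\ g\in \mathrm{Mon}\langle st^i\rangle\}\subseteq G^2$. Moreover, let $E\subseteq G^n$ be equationally definable and let $k\neq l$ be two coordinates such that for every $e=(e_1,\dots,e_n)\in E$ we have $e_k,e_l\in\mathrm{Mon}\langle s,t\rangle$. Then each of the following sets is equationally definable in $G$: (3) $\{e\in E \mid \mathrm{expsum}_s(e_k)=\mathrm{expsum}_t(e_l)\}$; (4) $\{e\in E \mid \mathrm{expsum}_s(e_k)=\mathrm{expsum}_s(e_l)\}$; (5) $\{e\in E \mid \mathrm{expsum}_t(e_k)=\mathrm{expsum}_t(e_l)\}$.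
   Context: For a subset $X$ of a group, $\mathrm{Mon}\langle X\rangle$ denotes the submonoid generated by $X$. For $x\in\{s,t\}$, $\mathrm{expsum}_x(g)$ is the exponent sum of $x$ in any word representing $g$ (well defined on $G$, since it is the image of $g$ under the homomorphism $G\to\mathbb{Z}$ sending $x\mapsto 1$ and the other two generators to $0$). An equation over a finitely generated group $G$ with variables from a finite set $\mathcal X$ is an element $w\in G*F(\mathcal X)$, written $w=1$; a solution is a homomorphism $\phi:G*F(\mathcal X)\to G$ that is the identity on $G$ with $\phi(w)=1$; a system of equations is a finite set of equations in the same variables, solved by a common solution. A set $D\subseteq G^n$ is equationally definable if there is a system of equations $\mathcal E$ over $G$ and variables $X_1,\dots,X_n$ of $\mathcal E$ (not necessarily all variables) such that $D=\{(\phi(X_1),\dots,\phi(X_n)) \mid \phi \text{ a solution of } \mathcal E\}$. *)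

theory Defs
  imports "HOL-Algebra.Group" "HOL-Computational_Algebra.Primes"
begin

datatype gen = A | S | T

text \<open>A word in the free group on a, s, t: letters (x, True) = x, (x, False) = x^-1.\<close>
type_synonym word = "(gen \<times> bool) list"

definition relators :: "nat \<Rightarrow> nat \<Rightarrow> word set" where
  "relators p q =
     {[(S, True), (A, True), (S, False)] @ replicate p (A, False),
      [(T, True), (A, True), (T, False)] @ replicate q (A, False)}"

definition red_step :: "nat \<Rightarrow> nat \<Rightarrow> word \<Rightarrow> word \<Rightarrow> bool" where
  "red_step p q u v \<longleftrightarrow>
     (\<exists>x y r. u = x @ r @ y \<and> v = x @ y \<and>
        (r \<in> relators p q \<or> (\<exists>g b. r = [(g, b), (g, \<not> b)])))"

definition weq :: "nat \<Rightarrow> nat \<Rightarrow> word \<Rightarrow> word \<Rightarrow> bool" where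
  "weq p q = equivclp (red_step p q)"

definition cls :: "nat \<Rightarrow> nat \<Rightarrow> word \<Rightarrow> word set" where
  "cls p q w = {v. weq p q w v}"

definition Gpres :: "nat \<Rightarrow> nat \<Rightarrow> word set monoid" where
  "Gpres p q = \<lparr> carrier = range (cls p q),
                 monoid.mult = (\<lambda>X Y. \<Union>x\<in>X. \<Union>y\<in>Y. cls p q (x @ y)),
                 one = cls p q [] \<rparr>"

definition ga :: "nat \<Rightarrow> nat \<Rightarrow> word set" where "ga p q = cls p q [(A, True)]"
definition gs :: "nat \<Rightarrow> nat \<Rightarrow> word set" where "gs p q = cls p q [(S, True)]"
definition gt :: "nat \<Rightarrow> nat \<Rightarrow> word set" where "gt p q = cls p q [(T, True)]"

inductive_set mon_gen :: "('a, 'b) monoid_scheme \<Rightarrow> 'a set \<Rightarrow> 'a set"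
  for G and X where
    one: "\<one>\<^bsub>G\<^esub> \<in> mon_gen G X"
  | gen: "x \<in> X \<Longrightarrow> x \<in> mon_gen G X"
  | mult: "x \<in> mon_gen G X \<Longrightarrow> y \<in> mon_gen G X \<Longrightarrow> x \<otimes>\<^bsub>G\<^esub> y \<in> mon_gen G X"

definition expsum_word :: "gen \<Rightarrow> word \<Rightarrow> int" where
  "expsum_word x w = (\<Sum>l\<leftarrow>w. if fst l = x then (if snd l then 1 else -1) else 0)"

text \<open>Exponent sum of x in any word representing g (well defined for x = S, T).\<close>
definition expsum :: "gen \<Rightarrow> word set \<Rightarrow> int" where
  "expsum x g = expsum_word x (SOME w. w \<in> g)"

text \<open>An element of G * F(X): a word in constants from G and variables (and their inverses).\<close>
datatype 'v eqletter = Cst "word set" | Var 'v | InvVar 'v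

type_synonym 'v equation = "'v eqletter list"

text \<open>Image of a letter under the homomorphism G * F(X) -> G that is the identity on G
  and sends each variable v to phi v.\<close>
fun eval_letter :: "nat \<Rightarrow> nat \<Rightarrow> ('v \<Rightarrow> word set) \<Rightarrow> 'v eqletter \<Rightarrow> word set" where
  "eval_letter p q \<phi> (Cst g) = g"
| "eval_letter p q \<phi> (Var v) = \<phi> v"
| "eval_letter p q \<phi> (InvVar v) = inv\<^bsub>Gpres p q\<^esub> (\<phi> v)"

definition eval_eq :: "nat \<Rightarrow> nat \<Rightarrow> ('v \<Rightarrow> word set) \<Rightarrow> 'v equation \<Rightarrow> word set" where
  "eval_eq p q \<phi> w = foldr (\<lambda>l acc. eval_letter p q \<phi> l \<otimes>\<^bsub>Gpres p q\<^esub> acc) w \<one>\<^bsub>Gpres p q\<^esub>"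

definition consts_ok :: "nat \<Rightarrow> nat \<Rightarrow> 'v equation \<Rightarrow> bool" where
  "consts_ok p q w \<longleftrightarrow> (\<forall>g. Cst g \<in> set w \<longrightarrow> g \<in> carrier (Gpres p q))"

text \<open>A system of equations (finite list), solved by an assignment phi of the variables
  into G.  Tuples in G^n are lists of length n.\<close>
definition solves :: "nat \<Rightarrow> nat \<Rightarrow> ('v \<Rightarrow> word set) \<Rightarrow> 'v equation list \<Rightarrow> bool" where
  "solves p q \<phi> E \<longleftrightarrow> (\<forall>v. \<phi> v \<in> carrier (Gpres p q)) \<and>
                       (\<forall>e\<in>set E. eval_eq p q \<phi> e = \<one>\<^bsub>Gpres p q\<^esub>)"

definition eq_definable :: "nat \<Rightarrow> nat \<Rightarrow> nat \<Rightarrow> word set list set \<Rightarrow> bool" where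
  "eq_definable p q n D \<longleftrightarrow>
     (\<exists>(E :: nat equation list) (xs :: nat list).
        (\<forall>e\<in>set E. consts_ok p q e) \<and> length xs = n \<and>
        D = {map \<phi> xs | \<phi>. solves p q \<phi> E})"

end

theory Submission
  imports Defs
begin

text \<open>The group is an amalgam of \<open>BS(1,p)\<close> and \<open>BS(1,q)\<close> over \<open>\<langle>a\<rangle>\<close>, and its elements have unique
  Britton normal forms: the free group acts on normal forms, the relators act trivially, and every
  word evaluates to the normal form it produces from the empty one.  Comparing normal forms shows
  that the centraliser of \<open>h = X Y\<^sup>i\<close> (for distinct stable letters \<open>X, Y\<close>) is \<open>\<langle>h\<rangle>\<close>, and that among
  the powers of \<open>h\<close> exactly the non-negative ones satisfy \<open>Y (g a g\<^sup>-\<^sup>1) Y\<^sup>-\<^sup>1 = g a\<^bsup>e(Y)\<^esup> g\<^sup>-\<^sup>1\<close>;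
  these two equations define \<open>Mon\<langle>h\<rangle>\<close>, which gives (1) and (2).

  For \<open>g \<in> Mon\<langle>s, t\<rangle>\<close> one has \<open>g a g\<^sup>-\<^sup>1 = a\<^bsup>p\<^sup>m q\<^sup>n\<^esup>\<close> with \<open>m, n\<close> the exponent sums of \<open>s, t\<close>, and
  since \<open>p \<noteq> q\<close> are primes this power determines \<open>m\<close> and \<open>n\<close>.  So the equation
  \<open>t\<^sup>j x a x\<^sup>-\<^sup>1 t\<^bsup>-j\<^esup> = t\<^bsup>j'\<^esup> y a y\<^sup>-\<^sup>1 t\<^bsup>-j'\<^esup>\<close> with \<open>t\<^sup>j, t\<^bsup>j'\<^esup> \<in> Mon\<langle>t\<rangle>\<close> is solvable iff \<open>x, y\<close> have the
  same exponent sum of \<open>s\<close>, which gives (4), symmetrically (5), and (3) by passing through an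
  auxiliary \<open>(s t)\<^sup>n \<in> Mon\<langle>s t\<rangle>\<close>.\<close>

section \<open>The presented group\<close>

lemma red_step_append_context:
  assumes "red_step p q u v"
  shows "red_step p q (w @ u @ z) (w @ v @ z)"
proof -
  from assms obtain x y r where "u = x @ r @ y" "v = x @ y"
    "r \<in> relators p q \<or> (\<exists>g b. r = [(g, b), (g, \<not> b)])"
    unfolding red_step_def by blast
  then show ?thesis
    unfolding red_step_def by (rule_tac x="w @ x" in exI, rule_tac x="y @ z" in exI) auto
qed

lemma weq_append_context:
  assumes "weq p q u v"
  shows "weq p q (w @ u @ z) (w @ v @ z)"
  using assms unfolding weq_def
proof (induction rule: equivclp_induct)
  case (step y z')
  then show ?case by (meson equivclp_into_equivclp red_step_append_context)
qed simp

lemma weq_refl [simp]: "weq p q u u"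
  by (simp add: weq_def)

lemma weq_sym: "weq p q u v \<Longrightarrow> weq p q v u"
  by (simp add: weq_def equivclp_sym)

lemma weq_trans: "weq p q u v \<Longrightarrow> weq p q v w \<Longrightarrow> weq p q u w"
  unfolding weq_def by (rule equivclp_trans)

lemma weq_append:
  assumes "weq p q u u'" "weq p q v v'"
  shows "weq p q (u @ v) (u' @ v')"
proof -
  have "weq p q (u @ v) (u' @ v)" using weq_append_context[OF assms(1), of "[]" v] by simp
  moreover have "weq p q (u' @ v) (u' @ v')" using weq_append_context[OF assms(2), of u' "[]"] by simp
  ultimately show ?thesis by (rule weq_trans)
qed

lemma red_step_imp_weq: "red_step p q u v \<Longrightarrow> weq p q u v"
  by (simp add: weq_def r_into_equivclp)

lemma cls_self [simp]: "u \<in> cls p q u"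
  by (simp add: cls_def)

lemma cls_eq_iff: "cls p q u = cls p q v \<longleftrightarrow> weq p q u v"
proof
  assume "cls p q u = cls p q v"
  then have "v \<in> cls p q u" by (metis cls_self)
  then show "weq p q u v" by (simp add: cls_def)
next
  assume "weq p q u v"
  then have "weq p q u w \<longleftrightarrow> weq p q v w" for w
    by (meson weq_sym weq_trans)
  then show "cls p q u = cls p q v" by (simp add: cls_def)
qed

lemma mult_cls: "cls p q u \<otimes>\<^bsub>Gpres p q\<^esub> cls p q v = cls p q (u @ v)"
proof -
  have same: "cls p q (x @ y) = cls p q (u @ v)" if "x \<in> cls p q u" "y \<in> cls p q v" for x y
  proof -
    from that have "weq p q u x" "weq p q v y" by (simp_all add: cls_def)
    then have "weq p q (x @ y) (u @ v)" by (blast intro: weq_append weq_sym)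
    then show ?thesis by (simp only: cls_eq_iff)
  qed
  have "cls p q u \<otimes>\<^bsub>Gpres p q\<^esub> cls p q v = (\<Union>x\<in>cls p q u. \<Union>y\<in>cls p q v. cls p q (x @ y))"
    by (simp add: Gpres_def)
  also have "\<dots> = cls p q (u @ v)"
    using same cls_self[of u p q] cls_self[of v p q] by blast
  finally show ?thesis .
qed

lemma one_Gpres: "\<one>\<^bsub>Gpres p q\<^esub> = cls p q []"
  by (simp add: Gpres_def)

lemma carrier_Gpres: "carrier (Gpres p q) = range (cls p q)"
  by (simp add: Gpres_def)

lemma cls_in_carrier [simp]: "cls p q u \<in> carrier (Gpres p q)"
  by (simp add: Gpres_def)

fun flip_letter :: "gen \<times> bool \<Rightarrow> gen \<times> bool" where
  "flip_letter (g, b) = (g, \<not> b)"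

definition word_inv :: "word \<Rightarrow> word" where
  "word_inv w = rev (map flip_letter w)"

lemma word_inv_Nil [simp]: "word_inv [] = []"
  by (simp add: word_inv_def)

lemma word_inv_Cons [simp]: "word_inv (x # w) = word_inv w @ [flip_letter x]"
  by (simp add: word_inv_def)

lemma weq_cancel_pair: "weq p q [(g, b), (g, \<not> b)] []"
  by (rule red_step_imp_weq) (unfold red_step_def, rule exI[of _ "[]"], rule exI[of _ "[]"], auto)

lemma weq_word_inv_append: "weq p q (word_inv w @ w) []"
proof (induction w)
  case (Cons x w)
  obtain g b where x: "x = (g, b)" by (cases x)
  have "weq p q (word_inv w @ [(g, \<not> b), (g, b)] @ w) (word_inv w @ [] @ w)"
    using weq_cancel_pair[of p q g "\<not> b"] by (intro weq_append_context) simp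
  then have "weq p q (word_inv (x # w) @ x # w) (word_inv w @ w)" using x by simp
  then show ?case using Cons.IH by (rule weq_trans)
qed simp

lemma group_Gpres: "group (Gpres p q)"
proof (rule groupI)
  fix x assume "x \<in> carrier (Gpres p q)"
  then obtain w where "x = cls p q w" by (auto simp: carrier_Gpres)
  then show "\<exists>y\<in>carrier (Gpres p q). y \<otimes>\<^bsub>Gpres p q\<^esub> x = \<one>\<^bsub>Gpres p q\<^esub>"
    by (intro bexI[of _ "cls p q (word_inv w)"])
      (auto simp: mult_cls one_Gpres cls_eq_iff weq_word_inv_append)
next
  fix x y z assume "x \<in> carrier (Gpres p q)" "y \<in> carrier (Gpres p q)" "z \<in> carrier (Gpres p q)"
  then show "x \<otimes>\<^bsub>Gpres p q\<^esub> y \<otimes>\<^bsub>Gpres p q\<^esub> z = x \<otimes>\<^bsub>Gpres p q\<^esub> (y \<otimes>\<^bsub>Gpres p q\<^esub> z)"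
    by (auto simp: carrier_Gpres mult_cls)
qed (auto simp: carrier_Gpres mult_cls one_Gpres)

lemma inv_cls: "inv\<^bsub>Gpres p q\<^esub> (cls p q w) = cls p q (word_inv w)"
  by (rule group.inv_equality[OF group_Gpres])
    (auto simp: mult_cls one_Gpres cls_eq_iff weq_word_inv_append)

lemma cls_relator:
  assumes "r \<in> relators p q"
  shows "cls p q r = \<one>\<^bsub>Gpres p q\<^esub>"
proof -
  have "red_step p q r []"
    unfolding red_step_def by (rule exI[of _ "[]"], rule exI[of _ "[]"], rule exI[of _ r]) (simp add: assms)
  then show ?thesis by (simp add: one_Gpres cls_eq_iff red_step_imp_weq)
qed

lemma expsum_word_Cons [simp]:
  "expsum_word x (l # w) = (if fst l = x then (if snd l then 1 else -1) else 0) + expsum_word x w"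
  by (simp add: expsum_word_def)

lemma expsum_word_Nil [simp]: "expsum_word x [] = 0"
  by (simp add: expsum_word_def)

lemma expsum_word_append [simp]: "expsum_word x (u @ v) = expsum_word x u + expsum_word x v"
  by (induction u) auto

lemma expsum_word_replicate_A [simp]: "x \<noteq> A \<Longrightarrow> expsum_word x (replicate n (A, b)) = 0"
  by (induction n) auto

lemma expsum_word_red_step:
  assumes "x \<noteq> A" "red_step p q u v"
  shows "expsum_word x u = expsum_word x v"
proof -
  from assms(2) obtain a b r where uv: "u = a @ r @ b" "v = a @ b"
    and r: "r \<in> relators p q \<or> (\<exists>g c. r = [(g, c), (g, \<not> c)])"
    unfolding red_step_def by blast
  from r have "expsum_word x r = 0"
    using assms(1) by (auto simp: relators_def)
  then show ?thesis using uv by simp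
qed

lemma expsum_word_weq:
  assumes "x \<noteq> A" "weq p q u v"
  shows "expsum_word x u = expsum_word x v"
  using assms(2) unfolding weq_def
proof (induction rule: equivclp_induct)
  case (step y z)
  then show ?case using expsum_word_red_step[OF assms(1)] by metis
qed simp

lemma expsum_cls:
  assumes "x \<noteq> A"
  shows "expsum x (cls p q w) = expsum_word x w"
proof -
  have "(SOME v. v \<in> cls p q w) \<in> cls p q w" by (rule someI[of _ w]) simp
  then have "weq p q w (SOME v. v \<in> cls p q w)" by (simp add: cls_def)
  then show ?thesis
    unfolding expsum_def by (rule expsum_word_weq[OF assms, symmetric])
qed

section \<open>Normal forms\<close>

text \<open>A syllable \<open>(Z, b, c)\<close> stands for \<open>Z\<^bsup>\<plusminus>1\<^esup> a\<^bsup>c\<^esup>\<close>, and a pair \<open>(k, L)\<close> for \<open>a\<^bsup>k\<^esup>\<close>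
  followed by the syllables of \<open>L\<close>.  With \<open>e(Z) = rel_exp p q Z\<close>, so that \<open>Z a Z\<^sup>-\<^sup>1 = a\<^bsup>e(Z)\<^esup>\<close>,
  a normal form has no power of \<open>a\<close> after a positive letter, a power \<open>0 \<le> c < e(Z)\<close> after a
  negative letter \<open>Z\<^sup>-\<^sup>1\<close>, and no pinch \<open>Z Z\<^sup>-\<^sup>1\<close> or \<open>Z\<^sup>-\<^sup>1 Z\<close>.\<close>

type_synonym syllable = "gen \<times> bool \<times> int"

definition rel_exp :: "nat \<Rightarrow> nat \<Rightarrow> gen \<Rightarrow> int" where
  "rel_exp p q Z = (if Z = S then int p else int q)"

fun normal_syllable :: "nat \<Rightarrow> nat \<Rightarrow> syllable \<Rightarrow> bool" where
  "normal_syllable p q (Z, b, c) \<longleftrightarrow>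
     Z \<noteq> A \<and> (b \<longrightarrow> c = 0) \<and> (\<not> b \<longrightarrow> 0 \<le> c \<and> c < rel_exp p q Z)"

fun reduced_pair :: "syllable \<Rightarrow> syllable \<Rightarrow> bool" where
  "reduced_pair (Z1, b1, c1) (Z2, b2, c2) \<longleftrightarrow>
     \<not> (Z1 = Z2 \<and> b1 \<and> \<not> b2) \<and> \<not> (Z1 = Z2 \<and> \<not> b1 \<and> c1 = 0 \<and> b2)"

fun reduced_chain :: "syllable list \<Rightarrow> bool" where
  "reduced_chain (x # y # L) \<longleftrightarrow> reduced_pair x y \<and> reduced_chain (y # L)"
| "reduced_chain _ \<longleftrightarrow> True"

definition reduced :: "nat \<Rightarrow> nat \<Rightarrow> syllable list \<Rightarrow> bool" where
  "reduced p q L \<longleftrightarrow> (\<forall>x\<in>set L. normal_syllable p q x) \<and> reduced_chain L"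

lemma reduced_Nil [simp]: "reduced p q []"
  by (simp add: reduced_def)

lemma reduced_Cons:
  "reduced p q (x # L) \<longleftrightarrow> normal_syllable p q x \<and> reduced p q L \<and> (L = [] \<or> reduced_pair x (hd L))"
  by (cases L) (auto simp: reduced_def)

lemma reduced_Cons_Cons:
  "reduced p q (x # y # L) \<longleftrightarrow> normal_syllable p q x \<and> reduced_pair x y \<and> reduced p q (y # L)"
  by (auto simp: reduced_def)

lemma reduced_append:
  "reduced p q (L @ M) \<longleftrightarrow>
     reduced p q L \<and> reduced p q M \<and> (L = [] \<or> M = [] \<or> reduced_pair (last L) (hd M))"
proof (induction L)
  case (Cons x L)
  then show ?case by (cases L; cases M) (auto simp: reduced_Cons)
qed simp

lemma reduced_snoc:
  "reduced p q (L @ [y]) \<longleftrightarrow> reduced p q L \<and> normal_syllable p q y \<and> (L = [] \<or> reduced_pair (last L) y)"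
  using reduced_append[of p q L "[y]"] by (simp add: reduced_Cons)

lemma reduced_if_all_positive:
  "\<forall>x\<in>set L. normal_syllable p q x \<and> fst (snd x) \<Longrightarrow> reduced p q L"
proof (induction L)
  case (Cons x L)
  then show ?case by (cases L; cases x) (auto simp: reduced_Cons)
qed simp

lemma reduced_if_all_negative:
  "\<forall>x\<in>set L. normal_syllable p q x \<and> \<not> fst (snd x) \<Longrightarrow> reduced p q L"
proof (induction L)
  case (Cons x L)
  then show ?case by (cases L; cases x) (auto simp: reduced_Cons)
qed simp

text \<open>\<open>act_stable\<close> and \<open>act_stable_inv\<close> are left multiplication by \<open>Z\<close> and \<open>Z\<^sup>-\<^sup>1\<close>; the remainder
  condition on negative syllables comes from \<open>Z\<^sup>-\<^sup>1 a\<^bsup>k\<^esup> = a\<^bsup>k div e\<^esup> Z\<^sup>-\<^sup>1 a\<^bsup>k mod e\<^esup>\<close>.\<close>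

fun act_stable :: "nat \<Rightarrow> nat \<Rightarrow> gen \<Rightarrow> int \<times> syllable list \<Rightarrow> int \<times> syllable list" where
  "act_stable p q Z (k, []) = (rel_exp p q Z * k, [(Z, True, 0)])"
| "act_stable p q Z (k, (Z', b', c') # L) =
     (if Z' = Z \<and> \<not> b' then (rel_exp p q Z * k + c', L)
      else (rel_exp p q Z * k, (Z, True, 0) # (Z', b', c') # L))"

fun act_stable_inv :: "nat \<Rightarrow> nat \<Rightarrow> gen \<Rightarrow> int \<times> syllable list \<Rightarrow> int \<times> syllable list" where
  "act_stable_inv p q Z (k, []) = (k div rel_exp p q Z, [(Z, False, k mod rel_exp p q Z)])"
| "act_stable_inv p q Z (k, (Z', b', c') # L) =
     (if Z' = Z \<and> b' \<and> k mod rel_exp p q Z = 0 then (k div rel_exp p q Z, L)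
      else (k div rel_exp p q Z, (Z, False, k mod rel_exp p q Z) # (Z', b', c') # L))"

definition act_letter :: "nat \<Rightarrow> nat \<Rightarrow> gen \<times> bool \<Rightarrow> int \<times> syllable list \<Rightarrow> int \<times> syllable list" where
  "act_letter p q l x =
     (if fst l = A then (if snd l then (fst x + 1, snd x) else (fst x - 1, snd x))
      else if snd l then act_stable p q (fst l) x else act_stable_inv p q (fst l) x)"

definition act_word :: "nat \<Rightarrow> nat \<Rightarrow> word \<Rightarrow> int \<times> syllable list \<Rightarrow> int \<times> syllable list" where
  "act_word p q w x = foldr (act_letter p q) w x"

lemma act_word_Nil [simp]: "act_word p q [] x = x"
  by (simp add: act_word_def)

lemma act_word_Cons [simp]: "act_word p q (l # w) x = act_letter p q l (act_word p q w x)"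
  by (simp add: act_word_def)

lemma act_word_append [simp]: "act_word p q (u @ v) x = act_word p q u (act_word p q v x)"
  by (simp add: act_word_def)

definition a_word :: "int \<Rightarrow> word" where
  "a_word k = (if k \<ge> 0 then replicate (nat k) (A, True) else replicate (nat (- k)) (A, False))"

fun syllable_word :: "syllable \<Rightarrow> word" where
  "syllable_word (Z, b, c) = (Z, b) # replicate (nat c) (A, True)"

definition syllables_word :: "syllable list \<Rightarrow> word" where
  "syllables_word L = concat (map syllable_word L)"

definition nf_word :: "int \<times> syllable list \<Rightarrow> word" where
  "nf_word x = a_word (fst x) @ syllables_word (snd x)"

lemma syllables_word_Nil [simp]: "syllables_word [] = []"
  by (simp add: syllables_word_def)

lemma syllables_word_Cons [simp]: "syllables_word (x # L) = syllable_word x @ syllables_word L"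
  by (simp add: syllables_word_def)

lemma syllables_word_append [simp]: "syllables_word (L @ M) = syllables_word L @ syllables_word M"
  by (simp add: syllables_word_def)

lemma syllables_word_replicate [simp]: "syllables_word (replicate n (Z, b, 0)) = replicate n (Z, b)"
  by (induction n) auto

locale bs_pair =
  fixes p q :: nat
  assumes p_ge2: "p \<ge> 2" and q_ge2: "q \<ge> 2"
begin

lemma rel_exp_ge2: "rel_exp p q Z \<ge> 2"
  using p_ge2 q_ge2 by (simp add: rel_exp_def)

lemma rel_exp_pos: "rel_exp p q Z > 0"
  using rel_exp_ge2[of Z] by simp

lemma reduced_act_stable:
  assumes "reduced p q L" "Z \<noteq> A"
  shows "reduced p q (snd (act_stable p q Z (k, L)))"
  using assms by (cases "(p, q, Z, (k, L))" rule: act_stable.cases) (auto simp: reduced_Cons)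

lemma reduced_act_stable_inv:
  assumes "reduced p q L" "Z \<noteq> A"
  shows "reduced p q (snd (act_stable_inv p q Z (k, L)))"
  using assms rel_exp_pos[of Z]
  by (cases "(p, q, Z, (k, L))" rule: act_stable_inv.cases) (auto simp: reduced_Cons)

lemma reduced_act_word:
  assumes "reduced p q (snd x)"
  shows "reduced p q (snd (act_word p q w x))"
  using assms
proof (induction w)
  case (Cons l w)
  then show ?case
    using reduced_act_stable reduced_act_stable_inv
    by (cases "act_word p q w x") (auto simp: act_letter_def)
qed simp

lemma act_stable_inv_act_stable:
  assumes "reduced p q L" "Z \<noteq> A"
  shows "act_stable_inv p q Z (act_stable p q Z (k, L)) = (k, L)"
proof (cases L)
  case (Cons y L')
  obtain Z' b' c' where y: "y = (Z', b', c')" by (cases y)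
  show ?thesis
  proof (cases "Z' = Z \<and> \<not> b'")
    case True
    then have "0 \<le> c'" "c' < rel_exp p q Z" using assms Cons y by (auto simp: reduced_Cons)
    then have d: "(rel_exp p q Z * k + c') div rel_exp p q Z = k"
      "(rel_exp p q Z * k + c') mod rel_exp p q Z = c'"
      using rel_exp_pos[of Z] by simp_all
    show ?thesis
    proof (cases L')
      case (Cons y2 L'')
      obtain Z2 b2 c2 where y2: "y2 = (Z2, b2, c2)" by (cases y2)
      have "\<not> (Z2 = Z \<and> b2 \<and> c' = 0)"
        using assms(1) \<open>L = y # L'\<close> Cons y y2 True by (auto simp: reduced_Cons_Cons)
      then show ?thesis using True \<open>L = y # L'\<close> Cons y y2 d by auto
    qed (use True Cons y d in simp)
  qed (use Cons y rel_exp_pos[of Z] in auto)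
qed (use rel_exp_pos[of Z] in simp)

lemma act_stable_act_stable_inv:
  assumes "reduced p q L" "Z \<noteq> A"
  shows "act_stable p q Z (act_stable_inv p q Z (k, L)) = (k, L)"
proof (cases L)
  case (Cons y L')
  obtain Z' b' c' where y: "y = (Z', b', c')" by (cases y)
  show ?thesis
  proof (cases "Z' = Z \<and> b' \<and> k mod rel_exp p q Z = 0")
    case True
    then have c: "c' = 0" using assms Cons y by (auto simp: reduced_Cons)
    have k: "rel_exp p q Z * (k div rel_exp p q Z) = k" using True by auto
    show ?thesis
    proof (cases L')
      case (Cons y2 L'')
      obtain Z2 b2 c2 where y2: "y2 = (Z2, b2, c2)" by (cases y2)
      have "\<not> (Z2 = Z \<and> \<not> b2)"
        using assms(1) \<open>L = y # L'\<close> Cons y y2 True by (auto simp: reduced_Cons_Cons)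
      then show ?thesis using True \<open>L = y # L'\<close> Cons y y2 c k by auto
    qed (use True Cons y c k in simp)
  qed (use Cons y rel_exp_pos[of Z] in auto)
qed (use rel_exp_pos[of Z] in simp)

lemma act_letter_cancel:
  assumes "reduced p q (snd x)"
  shows "act_letter p q (g, \<not> b) (act_letter p q (g, b) x) = x"
  using assms act_stable_inv_act_stable act_stable_act_stable_inv
  by (cases x) (auto simp: act_letter_def)

lemma act_word_replicate_A [simp]:
  "act_word p q (replicate n (A, True)) (k, L) = (k + int n, L)"
  "act_word p q (replicate n (A, False)) (k, L) = (k - int n, L)"
  by (induction n) (auto simp: act_letter_def)

lemma act_stable_inv_shift:
  "act_stable_inv p q Z (k - rel_exp p q Z, L) =
     (fst (act_stable_inv p q Z (k, L)) - 1, snd (act_stable_inv p q Z (k, L)))"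
proof -
  have "k div rel_exp p q Z = (k - rel_exp p q Z) div rel_exp p q Z + 1"
    "(k - rel_exp p q Z) mod rel_exp p q Z = k mod rel_exp p q Z"
    using rel_exp_pos[of Z] div_add_self2[of "rel_exp p q Z" "k - rel_exp p q Z"]
      mod_add_self2[of "k - rel_exp p q Z" "rel_exp p q Z"] by simp_all
  then show ?thesis
    by (cases "(p, q, Z, (k, L))" rule: act_stable_inv.cases) auto
qed

lemma act_word_relator:
  assumes "r \<in> relators p q" "reduced p q (snd x)"
  shows "act_word p q r x = x"
proof -
  obtain k L where x: "x = (k, L)" by fastforce
  obtain Z where Z: "Z \<noteq> A" and r: "r = [(Z, True), (A, True), (Z, False)] @ replicate (nat (rel_exp p q Z)) (A, False)"
    using assms(1) by (auto simp: relators_def rel_exp_def)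
  have "act_word p q r (k, L) =
      act_stable p q Z (fst (act_stable_inv p q Z (k - rel_exp p q Z, L)) + 1,
                        snd (act_stable_inv p q Z (k - rel_exp p q Z, L)))"
    using Z rel_exp_pos[of Z] by (simp add: r act_letter_def)
  also have "\<dots> = act_stable p q Z (act_stable_inv p q Z (k, L))"
    by (simp add: act_stable_inv_shift)
  also have "\<dots> = (k, L)"
    using act_stable_act_stable_inv Z assms(2) x by simp
  finally show ?thesis using x by simp
qed

lemma act_word_red_step:
  assumes "red_step p q u v" "reduced p q (snd x)"
  shows "act_word p q u x = act_word p q v x"
proof -
  from assms(1) obtain a b r where uv: "u = a @ r @ b" "v = a @ b"
    and r: "r \<in> relators p q \<or> (\<exists>g c. r = [(g, c), (g, \<not> c)])"
    unfolding red_step_def by blast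
  have red: "reduced p q (snd (act_word p q b x))" by (rule reduced_act_word[OF assms(2)])
  have "act_word p q r (act_word p q b x) = act_word p q b x"
    using r act_word_relator[OF _ red] act_letter_cancel[OF red, of _ "\<not> c" for c] by auto
  then show ?thesis using uv by simp
qed

lemma act_word_weq:
  assumes "weq p q u v" "reduced p q (snd x)"
  shows "act_word p q u x = act_word p q v x"
  using assms(1) unfolding weq_def
proof (induction rule: equivclp_induct)
  case (step y z)
  then show ?case using act_word_red_step assms(2) by metis
qed simp

lemma act_word_a_word [simp]: "act_word p q (a_word k) (j, L) = (j + k, L)"
  by (simp add: a_word_def)

lemma act_word_syllables_word:
  assumes "reduced p q L"
  shows "act_word p q (syllables_word L) (0, []) = (0, L)"
  using assms
proof (induction L)
  case (Cons x L)
  obtain Z b c where x: "x = (Z, b, c)" by (cases x)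
  have IH: "act_word p q (syllables_word L) (0, []) = (0, L)"
    using Cons by (simp add: reduced_Cons)
  have ok: "normal_syllable p q x" "L = [] \<or> reduced_pair x (hd L)"
    using Cons.prems by (auto simp: reduced_Cons)
  then have "c div rel_exp p q Z = 0 \<and> c mod rel_exp p q Z = c" "int (nat c) = c"
    using x by (cases b; simp)+
  then show ?case using x IH ok
    by (cases L) (auto simp: act_letter_def)
qed simp

lemma nf_word_unique:
  assumes "reduced p q (snd x)" "reduced p q (snd y)" "weq p q (nf_word x) (nf_word y)"
  shows "x = y"
proof -
  have "act_word p q (nf_word z) (0, []) = z" if "reduced p q (snd z)" for z
    using act_word_syllables_word[OF that] by (cases z) (simp add: nf_word_def)
  then show ?thesis using act_word_weq[OF assms(3), of "(0, [])"] assms(1,2) by simp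
qed

end

context group
begin

lemma inv_mult_cancel [simp]: "x \<in> carrier G \<Longrightarrow> z \<in> carrier G \<Longrightarrow> inv x \<otimes> (x \<otimes> z) = z"
  by (simp add: m_assoc[symmetric])

lemma mult_inv_cancel [simp]: "x \<in> carrier G \<Longrightarrow> z \<in> carrier G \<Longrightarrow> x \<otimes> (inv x \<otimes> z) = z"
  by (simp add: m_assoc[symmetric])

lemma conj_int_pow:
  assumes "x \<in> carrier G" "y \<in> carrier G"
  shows "x \<otimes> y [^] (k::int) \<otimes> inv x = (x \<otimes> y \<otimes> inv x) [^] k"
proof -
  have "(\<lambda>y. x \<otimes> y \<otimes> inv x) \<in> hom G G"
    using assms(1) by (intro homI) (simp_all add: m_assoc)
  from hom_int_pow[OF this assms(2) is_group is_group] show ?thesis .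
qed

end

context bs_pair
begin

abbreviation GG where "GG \<equiv> Gpres p q"
abbreviation gmul (infixl "\<cdot>" 70) where "x \<cdot> y \<equiv> x \<otimes>\<^bsub>Gpres p q\<^esub> y"
abbreviation ginv where "ginv x \<equiv> inv\<^bsub>Gpres p q\<^esub> x"
abbreviation gone where "gone \<equiv> \<one>\<^bsub>Gpres p q\<^esub>"
abbreviation aa where "aa \<equiv> cls p q [(A, True)]"
abbreviation gZ where "gZ Z \<equiv> cls p q [(Z, True)]"

sublocale G: group "Gpres p q"
  by (rule group_Gpres)

lemma cls_append: "cls p q (u @ v) = cls p q u \<cdot> cls p q v"
  by (simp add: mult_cls)

lemma cls_Cons: "cls p q (l # v) = cls p q [l] \<cdot> cls p q v"
  by (simp add: mult_cls)

lemma cls_Nil: "cls p q [] = gone"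
  by (simp add: one_Gpres)

lemma cls_inv_letter: "cls p q [(Z, False)] = ginv (gZ Z)"
  by (simp add: inv_cls word_inv_def)

lemma cls_replicate: "cls p q (replicate n l) = cls p q [l] [^]\<^bsub>GG\<^esub> n"
proof (induction n)
  case (Suc n)
  then show ?case by (metis G.nat_pow_Suc2 cls_Cons cls_in_carrier replicate_Suc)
qed (simp add: cls_Nil)

lemma cls_a_word: "cls p q (a_word k) = aa [^]\<^bsub>GG\<^esub> k"
  by (simp add: a_word_def cls_replicate cls_inv_letter G.nat_pow_inv int_pow_def2 del: pow_nat)

lemma stable_conj_a:
  assumes "Z \<noteq> A"
  shows "gZ Z \<cdot> aa \<cdot> ginv (gZ Z) = aa [^]\<^bsub>GG\<^esub> rel_exp p q Z"
proof -
  let ?r = "[(Z, True), (A, True), (Z, False)] @ replicate (nat (rel_exp p q Z)) (A, False)"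
  have "?r \<in> relators p q" using assms by (cases Z) (auto simp: relators_def rel_exp_def)
  then have "gone = cls p q ([(Z, True)] @ [(A, True)] @ [(Z, False)] @ replicate (nat (rel_exp p q Z)) (A, False))"
    by (simp add: cls_relator)
  also have "\<dots> = gZ Z \<cdot> aa \<cdot> ginv (gZ Z) \<cdot> ginv (aa [^]\<^bsub>GG\<^esub> nat (rel_exp p q Z))"
    unfolding cls_append cls_inv_letter cls_replicate G.nat_pow_inv[symmetric, OF cls_in_carrier]
    by (simp add: G.m_assoc)
  finally have "gZ Z \<cdot> aa \<cdot> ginv (gZ Z) \<cdot> ginv (aa [^]\<^bsub>GG\<^esub> nat (rel_exp p q Z)) = gone" ..
  then have "gZ Z \<cdot> aa \<cdot> ginv (gZ Z) = gone \<cdot> aa [^]\<^bsub>GG\<^esub> nat (rel_exp p q Z)"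
    by (rule G.inv_solve_right'[THEN iffD1, rotated 3]) simp_all
  then show ?thesis using rel_exp_pos[of Z] by (simp add: pow_nat)
qed

lemma stable_conj_a_pow:
  assumes "Z \<noteq> A"
  shows "gZ Z \<cdot> aa [^]\<^bsub>GG\<^esub> (k::int) \<cdot> ginv (gZ Z) = aa [^]\<^bsub>GG\<^esub> (rel_exp p q Z * k)"
  by (simp add: G.conj_int_pow stable_conj_a[OF assms] G.int_pow_pow)

lemma stable_mult_a_pow:
  assumes "Z \<noteq> A"
  shows "gZ Z \<cdot> aa [^]\<^bsub>GG\<^esub> (k::int) = aa [^]\<^bsub>GG\<^esub> (rel_exp p q Z * k) \<cdot> gZ Z"
  by (simp add: stable_conj_a_pow[OF assms, symmetric] G.m_assoc)

lemma inv_stable_mult_a_pow: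
  assumes "Z \<noteq> A"
  shows "ginv (gZ Z) \<cdot> aa [^]\<^bsub>GG\<^esub> (rel_exp p q Z * k) = aa [^]\<^bsub>GG\<^esub> k \<cdot> ginv (gZ Z)"
  by (simp add: stable_conj_a_pow[OF assms, symmetric] G.m_assoc)

definition nf_elt :: "int \<times> syllable list \<Rightarrow> word set" where
  "nf_elt x = cls p q (nf_word x)"

lemma nf_elt_in_carrier [simp]: "nf_elt x \<in> carrier GG"
  by (simp add: nf_elt_def)

lemma nf_elt_eq: "nf_elt (k, L) = aa [^]\<^bsub>GG\<^esub> k \<cdot> cls p q (syllables_word L)"
  by (simp add: nf_elt_def nf_word_def cls_append cls_a_word)

lemma cls_syllable_word:
  assumes "0 \<le> c"
  shows "cls p q (syllable_word (Z, b, c)) = (if b then gZ Z else ginv (gZ Z)) \<cdot> aa [^]\<^bsub>GG\<^esub> c"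
  using assms by (simp add: cls_Cons[of _ "replicate _ _"] cls_replicate cls_inv_letter pow_nat)

lemma a_mult_nf_elt: "cls p q [(A, b)] \<cdot> nf_elt (k, L) = nf_elt (if b then k + 1 else k - 1, L)"
proof -
  have "cls p q [(A, b)] = aa [^]\<^bsub>GG\<^esub> (if b then 1 else - 1 :: int)"
    by (simp add: cls_inv_letter G.int_pow_neg)
  then have "cls p q [(A, b)] \<cdot> aa [^]\<^bsub>GG\<^esub> k = aa [^]\<^bsub>GG\<^esub> (if b then k + 1 else k - 1)"
    by (simp add: G.int_pow_mult[symmetric] add.commute)
  then show ?thesis by (simp add: nf_elt_eq G.m_assoc[symmetric])
qed

lemma stable_mult_nf_elt:
  assumes "reduced p q L" "Z \<noteq> A"
  shows "gZ Z \<cdot> nf_elt (k, L) = nf_elt (act_stable p q Z (k, L))"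
proof (cases "\<exists>c L'. L = (Z, False, c) # L'")
  case True
  then obtain c L' where L: "L = (Z, False, c) # L'" by blast
  have c: "0 \<le> c" using assms(1) L by (simp add: reduced_Cons)
  have "gZ Z \<cdot> nf_elt (k, L)
      = (gZ Z \<cdot> aa [^]\<^bsub>GG\<^esub> k \<cdot> ginv (gZ Z)) \<cdot> aa [^]\<^bsub>GG\<^esub> c \<cdot> cls p q (syllables_word L')"
    using c by (simp add: nf_elt_eq L cls_append cls_syllable_word del: syllable_word.simps)
      (simp add: G.m_assoc)
  also have "\<dots> = nf_elt (rel_exp p q Z * k + c, L')"
    by (simp add: stable_conj_a_pow[OF assms(2)] nf_elt_eq G.int_pow_mult G.m_assoc)
  finally show ?thesis using L by simp
next
  case False
  then have "act_stable p q Z (k, L) = (rel_exp p q Z * k, (Z, True, 0) # L)"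
    by (cases "(p, q, Z, (k, L))" rule: act_stable.cases) auto
  moreover have "gZ Z \<cdot> nf_elt (k, L) = aa [^]\<^bsub>GG\<^esub> (rel_exp p q Z * k) \<cdot> (gZ Z \<cdot> cls p q (syllables_word L))"
    by (simp add: nf_elt_eq stable_mult_a_pow[OF assms(2)] G.m_assoc[symmetric])
  ultimately show ?thesis by (simp add: nf_elt_eq cls_Cons[of "(Z, True)" "syllables_word L"])
qed

lemma inv_stable_mult_nf_elt:
  assumes "reduced p q L" "Z \<noteq> A"
  shows "ginv (gZ Z) \<cdot> nf_elt (k, L) = nf_elt (act_stable_inv p q Z (k, L))"
proof -
  define d where "d = k div rel_exp p q Z"
  define r where "r = k mod rel_exp p q Z"
  have r: "0 \<le> r" using rel_exp_pos[of Z] by (simp add: r_def)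
  have split: "ginv (gZ Z) \<cdot> aa [^]\<^bsub>GG\<^esub> k = aa [^]\<^bsub>GG\<^esub> d \<cdot> ginv (gZ Z) \<cdot> aa [^]\<^bsub>GG\<^esub> r"
  proof -
    have "k = rel_exp p q Z * d + r" by (simp add: d_def r_def)
    then have "ginv (gZ Z) \<cdot> aa [^]\<^bsub>GG\<^esub> k = ginv (gZ Z) \<cdot> aa [^]\<^bsub>GG\<^esub> (rel_exp p q Z * d) \<cdot> aa [^]\<^bsub>GG\<^esub> r"
      by (simp add: G.int_pow_mult G.m_assoc)
    then show ?thesis by (simp only: inv_stable_mult_a_pow[OF assms(2)])
  qed
  show ?thesis
  proof (cases "\<exists>L'. L = (Z, True, 0) # L' \<and> r = 0")
    case True
    then obtain L' where L: "L = (Z, True, 0) # L'" and "r = 0" by blast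
    have "ginv (gZ Z) \<cdot> nf_elt (k, L) = (ginv (gZ Z) \<cdot> aa [^]\<^bsub>GG\<^esub> k) \<cdot> gZ Z \<cdot> cls p q (syllables_word L')"
      by (simp add: nf_elt_eq L cls_Cons[of "(Z, True)" "syllables_word L'"] G.m_assoc)
    also have "\<dots> = nf_elt (d, L')"
      using \<open>r = 0\<close> by (simp add: split nf_elt_eq G.m_assoc)
    finally show ?thesis using L \<open>r = 0\<close> by (simp add: d_def r_def)
  next
    case False
    have "reduced p q L \<Longrightarrow> L = (Z, True, c) # L' \<Longrightarrow> c = 0" for c L'
      by (simp add: reduced_Cons)
    then have "act_stable_inv p q Z (k, L) = (d, (Z, False, r) # L)"
      using False assms(1) by (cases "(p, q, Z, (k, L))" rule: act_stable_inv.cases)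
        (auto simp: d_def r_def)
    moreover have "ginv (gZ Z) \<cdot> nf_elt (k, L)
        = aa [^]\<^bsub>GG\<^esub> d \<cdot> (ginv (gZ Z) \<cdot> aa [^]\<^bsub>GG\<^esub> r \<cdot> cls p q (syllables_word L))"
      by (simp add: nf_elt_eq split G.m_assoc[symmetric])
    ultimately show ?thesis
      using r by (simp add: nf_elt_eq cls_append cls_syllable_word del: syllable_word.simps)
  qed
qed

lemma cls_mult_nf_elt:
  assumes "reduced p q (snd x)"
  shows "cls p q w \<cdot> nf_elt x = nf_elt (act_word p q w x)"
  using assms
proof (induction w arbitrary: x)
  case (Cons l w)
  obtain g b where l: "l = (g, b)" by fastforce
  obtain k L where x': "act_word p q w x = (k, L)" by fastforce
  have red: "reduced p q L" using reduced_act_word[OF Cons.prems, of w] x' by simp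
  have "cls p q (l # w) \<cdot> nf_elt x = cls p q [l] \<cdot> nf_elt (k, L)"
    using Cons x' by (simp add: cls_Cons[of l w] G.m_assoc)
  also have "\<dots> = nf_elt (act_letter p q l (k, L))"
    using red a_mult_nf_elt stable_mult_nf_elt inv_stable_mult_nf_elt
    by (auto simp: l act_letter_def cls_inv_letter)
  finally show ?case using x' by simp
qed (simp add: cls_Nil nf_elt_def)

lemma nf_elt_exists:
  assumes "g \<in> carrier GG"
  obtains x where "reduced p q (snd x)" "g = nf_elt x"
proof -
  obtain w where g: "g = cls p q w" using assms by (auto simp: carrier_Gpres)
  have "nf_elt (0, []) = gone" by (simp add: nf_elt_eq cls_Nil)
  then have "g = nf_elt (act_word p q w (0, []))"
    using cls_mult_nf_elt[of "(0, [])" w] g by simp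
  then show thesis using that reduced_act_word[of "(0, [])" w] by simp
qed

lemma nf_elt_inj:
  assumes "reduced p q (snd x)" "reduced p q (snd y)" "nf_elt x = nf_elt y"
  shows "x = y"
  using assms nf_word_unique cls_eq_iff unfolding nf_elt_def by blast

lemma a_pow_inj:
  assumes "aa [^]\<^bsub>GG\<^esub> (k::int) = aa [^]\<^bsub>GG\<^esub> (l::int)"
  shows "k = l"
  using assms nf_elt_inj[of "(k, [])" "(l, [])"] by (simp add: nf_elt_eq cls_Nil)

end

section \<open>The centraliser of \<open>X Y\<^sup>i\<close>\<close>

lemma append_eq_append_shorter:
  assumes "B @ L = L @ C" "length B = length C" "length L < length B"
  shows "take (length L) B = L" "drop (length C - length L) C = L"
proof -
  have "take (length L) (B @ L) = take (length L) (L @ C)" "drop (length B) (B @ L) = drop (length B) (L @ C)"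
    using assms(1) by simp_all
  then show "take (length L) B = L" "drop (length C - length L) C = L"
    using assms(2,3) by simp_all
qed

lemma concat_replicate_commute: "B @ concat (replicate n B) = concat (replicate n B) @ B"
  by (induction n) auto

lemma append_commute_unbordered:
  assumes "B @ L = L @ C" "length B = length C" "B \<noteq> []"
    and unbordered: "\<forall>j. 0 < j \<and> j < length B \<longrightarrow> take j B \<noteq> drop (length C - j) C"
  shows "\<exists>n. L = concat (replicate n B) \<and> (0 < n \<longrightarrow> B = C)"
  using assms(1)
proof (induction L rule: length_induct)
  case (1 L)
  show ?case
  proof (cases "length L < length B")
    case True
    then have "L = []"
      using append_eq_append_shorter[OF "1.prems" assms(2) True] unbordered by force
    then show ?thesis by (intro exI[of _ 0]) simp
  next
    case False
    then have "take (length B) L = B"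
      using arg_cong[OF "1.prems", of "take (length B)"] by simp
    then obtain L' where L: "L = B @ L'" by (metis append_take_drop_id)
    then have eq': "B @ L' = L' @ C" using "1.prems" by simp
    moreover have "length L' < length L" using L assms(3) by simp
    ultimately obtain n where n: "L' = concat (replicate n B)" using "1.IH" by blast
    then have "concat (replicate n B) @ B = concat (replicate n B) @ C"
      using eq' concat_replicate_commute by metis
    then show ?thesis using L n by (intro exI[of _ "Suc n"]) simp
  qed
qed

context bs_pair
begin

lemma nf_elt_mult_stable:
  assumes "reduced p q L" "Z \<noteq> A"
  obtains L' where "reduced p q L'" "nf_elt (k, L) \<cdot> cls p q [(Z, b)] = nf_elt (k, L')"
    "L' = L @ [(Z, b, 0)] \<or> length L' < length L + 1"
proof (cases "\<exists>L0. L = L0 @ [(Z, \<not> b, 0)]")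
  case True
  then obtain L0 where L: "L = L0 @ [(Z, \<not> b, 0)]" by blast
  have "nf_elt (k, L) \<cdot> cls p q [(Z, b)]
      = aa [^]\<^bsub>GG\<^esub> k \<cdot> cls p q (syllables_word L0) \<cdot> (cls p q [(Z, \<not> b)] \<cdot> cls p q [(Z, b)])"
    by (simp add: nf_elt_eq L cls_append G.m_assoc)
  also have "cls p q [(Z, \<not> b)] \<cdot> cls p q [(Z, b)] = gone"
    by (cases b) (simp_all add: cls_inv_letter)
  finally show thesis
    using that[of L0] assms(1) L by (simp add: nf_elt_eq reduced_snoc)
next
  case False
  have "reduced_pair (last L) (Z, b, 0)" if "L \<noteq> []"
  proof -
    obtain L0 Z' b' c' where L: "L = L0 @ [(Z', b', c')]"
      using \<open>L \<noteq> []\<close> by (metis prod_cases3 rev_exhaust)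
    then have "b' \<longrightarrow> c' = 0" using assms(1) by (simp add: reduced_snoc)
    then show ?thesis using False L by auto
  qed
  then have "reduced p q (L @ [(Z, b, 0)])"
    using assms rel_exp_pos[of Z] by (auto simp: reduced_snoc)
  moreover have "nf_elt (k, L) \<cdot> cls p q [(Z, b)] = nf_elt (k, L @ [(Z, b, 0)])"
    by (simp add: nf_elt_eq cls_append G.m_assoc)
  ultimately show thesis using that by blast
qed

definition plain_syllables :: "word \<Rightarrow> syllable list" where
  "plain_syllables W = map (\<lambda>(Z, b). (Z, b, 0)) W"

lemma nf_elt_mult_stable_word:
  assumes "reduced p q L" "\<forall>l\<in>set W. fst l \<noteq> A"
  obtains L' where "reduced p q L'" "nf_elt (k, L) \<cdot> cls p q W = nf_elt (k, L')"
    "L' = L @ plain_syllables W \<or> length L' < length L + length W"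
proof -
  have "\<exists>L'. reduced p q L' \<and> nf_elt (k, L) \<cdot> cls p q W = nf_elt (k, L') \<and>
      (L' = L @ plain_syllables W \<or> length L' < length L + length W)"
    using assms(2)
  proof (induction W rule: rev_induct)
    case (snoc l W)
    obtain Z b where l: "l = (Z, b)" and Z: "Z \<noteq> A" using snoc.prems by (cases l) auto
    from snoc obtain L' where L': "reduced p q L'" "nf_elt (k, L) \<cdot> cls p q W = nf_elt (k, L')"
      "L' = L @ plain_syllables W \<or> length L' < length L + length W" by auto
    obtain L'' where L'': "reduced p q L''" "nf_elt (k, L') \<cdot> cls p q [(Z, b)] = nf_elt (k, L'')"
      "L'' = L' @ [(Z, b, 0)] \<or> length L'' < length L' + 1"
      using nf_elt_mult_stable[OF L'(1) Z] by blast
    have "nf_elt (k, L) \<cdot> cls p q (W @ [l]) = nf_elt (k, L'')"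
      using L'(2) L''(2) by (simp add: cls_append G.m_assoc[symmetric] l)
    then show ?case using L'(3) L''(1,3) l by (auto simp: plain_syllables_def)
  qed (use assms(1) in \<open>auto simp: cls_Nil plain_syllables_def\<close>)
  then show thesis using that by blast
qed

definition rel_exp_prod :: "syllable list \<Rightarrow> int" where
  "rel_exp_prod P = (\<Prod>x\<leftarrow>P. rel_exp p q (fst x))"

lemma rel_exp_prod_simps [simp]:
  "rel_exp_prod [] = 1" "rel_exp_prod (x # P) = rel_exp p q (fst x) * rel_exp_prod P"
  by (simp_all add: rel_exp_prod_def)

lemma rel_exp_prod_gt1: "P \<noteq> [] \<Longrightarrow> rel_exp_prod P > 1"
proof (induction P)
  case (Cons x P)
  have "rel_exp_prod P \<ge> 1" using Cons.IH by (cases "P = []") auto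
  then have "rel_exp p q (fst x) * rel_exp_prod P \<ge> 2 * 1"
    using rel_exp_ge2[of "fst x"] by (intro mult_mono) auto
  then show ?case by simp
qed simp

lemma positive_word_mult_nf_elt:
  assumes "reduced p q P" "\<forall>x\<in>set P. snd x = (True, 0)"
    "reduced p q L" "L = [] \<or> fst (snd (hd L))"
  shows "cls p q (syllables_word P) \<cdot> nf_elt (k, L) = nf_elt (rel_exp_prod P * k, P @ L) \<and>
    reduced p q (P @ L)"
  using assms(1,2)
proof (induction P)
  case (Cons x P)
  obtain Z where x: "x = (Z, True, 0)" and Z: "Z \<noteq> A" using Cons.prems
    by (cases x) (auto simp: reduced_Cons)
  from Cons have IH: "cls p q (syllables_word P) \<cdot> nf_elt (k, L) = nf_elt (rel_exp_prod P * k, P @ L)"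
    "reduced p q (P @ L)" by (auto simp: reduced_Cons)
  have hd: "P @ L = [] \<or> fst (snd (hd (P @ L)))"
    using assms(4) Cons.prems(2) by (cases P) auto
  have "act_stable p q Z (rel_exp_prod P * k, P @ L) = (rel_exp_prod (x # P) * k, (x # P) @ L)"
    using hd x by (cases "P @ L") (auto simp: mult.assoc)
  moreover have "cls p q (syllables_word (x # P)) \<cdot> nf_elt (k, L)
      = gZ Z \<cdot> nf_elt (rel_exp_prod P * k, P @ L)"
    using IH(1) by (simp add: x cls_Cons[of _ "syllables_word P"] G.m_assoc)
  moreover have "reduced p q ((x # P) @ L)"
    using IH(2) hd x Z by (cases "P @ L") (auto simp: reduced_Cons)
  ultimately show ?case using stable_mult_nf_elt[OF IH(2) Z] by simp
qed (simp add: cls_Nil assms(3))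

lemma negative_word_mult_nf_elt:
  assumes "\<forall>x\<in>set N. snd x = (False, 0) \<and> fst x \<noteq> A"
    "reduced p q L" "L = [] \<or> \<not> fst (snd (hd L))"
  shows "\<exists>k' D. cls p q (syllables_word N) \<cdot> nf_elt (k, L) = nf_elt (k', D @ L) \<and>
    reduced p q (D @ L) \<and> map fst D = map fst N \<and> (\<forall>x\<in>set D. \<not> fst (snd x)) \<and>
    (D = N \<longrightarrow> k = rel_exp_prod N * k')"
  using assms(1)
proof (induction N)
  case (Cons x N)
  obtain Z where x: "x = (Z, False, 0)" and Z: "Z \<noteq> A" using Cons.prems by (cases x) auto
  from Cons obtain k'' D' where IH: "cls p q (syllables_word N) \<cdot> nf_elt (k, L) = nf_elt (k'', D' @ L)"
    "reduced p q (D' @ L)" "map fst D' = map fst N" "\<forall>x\<in>set D'. \<not> fst (snd x)"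
    "D' = N \<longrightarrow> k = rel_exp_prod N * k''" by auto
  have hd: "D' @ L = [] \<or> \<not> fst (snd (hd (D' @ L)))"
    using assms(3) IH(4) by (cases D') auto
  define d where "d = k'' div rel_exp p q Z"
  define r where "r = k'' mod rel_exp p q Z"
  have act: "act_stable_inv p q Z (k'', D' @ L) = (d, (Z, False, r) # D' @ L)"
    using hd by (cases "D' @ L") (auto simp: d_def r_def)
  have "cls p q (syllables_word (x # N)) \<cdot> nf_elt (k, L) = nf_elt (d, ((Z, False, r) # D') @ L)"
    using IH(1) inv_stable_mult_nf_elt[OF IH(2) Z] act
    by (simp add: x cls_Cons[of _ "syllables_word N"] cls_inv_letter G.m_assoc)
  moreover have "reduced p q (((Z, False, r) # D') @ L)"
    using IH(2) hd Z rel_exp_pos[of Z] by (cases "D' @ L") (auto simp: reduced_Cons r_def)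
  moreover have "(Z, False, r) # D' = x # N \<longrightarrow> k = rel_exp_prod (x # N) * d"
    using IH(5) x by (auto simp: d_def r_def)
  ultimately show ?case using IH(3,4) x by (intro exI[of _ d] exI[of _ "(Z, False, r) # D'"]) auto
qed (use assms(2) in \<open>auto simp: cls_Nil intro: exI[of _ "[]"]\<close>)

lemma cls_syllables_word_power:
  "cls p q (syllables_word (concat (replicate n P))) = cls p q (syllables_word P) [^]\<^bsub>GG\<^esub> n"
proof (induction n)
  case (Suc n)
  then show ?case by (simp add: cls_append G.nat_pow_Suc2 del: nat_pow_Suc G.nat_pow_Suc)
qed (simp add: cls_Nil)

end

definition h_syllables :: "gen \<Rightarrow> gen \<Rightarrow> nat \<Rightarrow> syllable list" where
  "h_syllables X Y i = (X, True, 0) # replicate i (Y, True, 0)"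

definition h_inv_syllables :: "gen \<Rightarrow> gen \<Rightarrow> nat \<Rightarrow> syllable list" where
  "h_inv_syllables X Y i = replicate i (Y, False, 0) @ [(X, False, 0)]"

lemma length_h_syllables [simp]: "length (h_syllables X Y i) = Suc i"
  by (simp add: h_syllables_def)

lemma length_h_inv_syllables [simp]: "length (h_inv_syllables X Y i) = Suc i"
  by (simp add: h_inv_syllables_def)

lemma h_syllables_unbordered:
  assumes "0 < j" "j < Suc i" "X \<noteq> Y"
  shows "take j (h_syllables X Y i) \<noteq> drop (Suc i - j) (h_syllables X Y i)"
proof
  assume eq: "take j (h_syllables X Y i) = drop (Suc i - j) (h_syllables X Y i)"
  have "hd (take j (h_syllables X Y i)) = (X, True, 0)" using assms by (cases j) (auto simp: h_syllables_def)
  moreover have "drop (Suc i - j) (h_syllables X Y i) = replicate j (Y, True, 0)"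
  proof -
    have "Suc i - j = Suc (i - j)" using assms by simp
    then show ?thesis using assms by (simp add: h_syllables_def)
  qed
  ultimately have "(X, True, (0::int)) = hd (replicate j (Y, True, (0::int)))"
    using eq by metis
  then show False using assms by (cases j) auto
qed

lemma h_inv_syllables_unbordered:
  assumes "0 < j" "j < Suc i" "X \<noteq> Y" "map fst D = map fst (h_inv_syllables X Y i)"
  shows "take j D \<noteq> drop (Suc i - j) (h_inv_syllables X Y i)"
proof
  assume eq: "take j D = drop (Suc i - j) (h_inv_syllables X Y i)"
  have mD: "map fst D = replicate i Y @ [X]" using assms(4) by (simp add: h_inv_syllables_def)
  have "map fst (take j D) = take j (map fst D)" by (simp add: take_map)
  also have "\<dots> = replicate j Y" using mD assms by simp
  finally have l1: "last (map fst (take j D)) = Y" using assms by (cases j) auto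
  have "map fst (drop (Suc i - j) (h_inv_syllables X Y i)) = drop (Suc i - j) (replicate i Y @ [X])"
    by (simp only: drop_map[symmetric]) (simp add: h_inv_syllables_def)
  moreover have "last (drop (Suc i - j) (replicate i Y @ [X])) = X"
    using assms by (simp add: last_drop)
  ultimately have "last (map fst (drop (Suc i - j) (h_inv_syllables X Y i))) = X" by simp
  then show False using eq l1 assms(3) by simp
qed

context bs_pair
begin

definition hxy :: "gen \<Rightarrow> gen \<Rightarrow> nat \<Rightarrow> word set" where
  "hxy X Y i = gZ X \<cdot> gZ Y [^]\<^bsub>GG\<^esub> i"

lemma hxy_in_carrier [simp]: "hxy X Y i \<in> carrier GG"
  by (simp add: hxy_def)

lemma hxy_0 [simp]: "hxy X Y 0 = gZ X"
  by (simp add: hxy_def)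

lemma syllables_word_h_syllables: "syllables_word (h_syllables X Y i) = (X, True) # replicate i (Y, True)"
  by (simp add: h_syllables_def)

lemma syllables_word_h_inv_syllables:
  "syllables_word (h_inv_syllables X Y i) = replicate i (Y, False) @ [(X, False)]"
  by (simp add: h_inv_syllables_def)

lemma cls_h_syllables: "cls p q (syllables_word (h_syllables X Y i)) = hxy X Y i"
  by (simp add: syllables_word_h_syllables hxy_def cls_Cons[of _ "replicate i (Y, True)"] cls_replicate)

lemma cls_h_inv_syllables: "cls p q (syllables_word (h_inv_syllables X Y i)) = ginv (hxy X Y i)"
  by (simp add: syllables_word_h_inv_syllables hxy_def cls_append cls_replicate cls_inv_letter
      G.nat_pow_inv G.inv_mult_group)

lemma reduced_h_syllables: "X \<noteq> A \<Longrightarrow> Y \<noteq> A \<Longrightarrow> reduced p q (h_syllables X Y i)"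
  by (rule reduced_if_all_positive) (auto simp: h_syllables_def)

lemma plain_syllables_h_syllables: "plain_syllables (syllables_word (h_syllables X Y i)) = h_syllables X Y i"
  by (simp add: syllables_word_h_syllables h_syllables_def plain_syllables_def)

lemma plain_syllables_h_inv_syllables:
  "plain_syllables (syllables_word (h_inv_syllables X Y i)) = h_inv_syllables X Y i"
  by (simp add: syllables_word_h_inv_syllables h_inv_syllables_def plain_syllables_def)

end

context bs_pair
begin

text \<open>If \<open>g\<close> commutes with \<open>h = X Y\<^sup>i\<close>, compare the normal forms of \<open>h g\<close> and \<open>g h\<close>: on one
  side the syllables of \<open>h\<close> (or of \<open>h\<^sup>-\<^sup>1\<close>) are prepended, on the other they are appended, so the
  syllable list of \<open>g\<close> commutes with theirs as a word; and only on one side is the leading power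
  \<open>a\<^bsup>k\<^esup>\<close> of \<open>g\<close> multiplied by \<open>e(X) e(Y)\<^sup>i > 1\<close>, so \<open>k = 0\<close>.\<close>

lemma commuting_nf_elt_positive:
  assumes XY: "X \<noteq> A" "Y \<noteq> A" "X \<noteq> Y"
    and L: "reduced p q L" "L = [] \<or> fst (snd (hd L))"
    and comm: "nf_elt (k, L) \<cdot> hxy X Y i = hxy X Y i \<cdot> nf_elt (k, L)"
  shows "\<exists>n::nat. nf_elt (k, L) = hxy X Y i [^]\<^bsub>GG\<^esub> n"
proof -
  let ?H = "h_syllables X Y i"
  have left: "hxy X Y i \<cdot> nf_elt (k, L) = nf_elt (rel_exp_prod ?H * k, ?H @ L)"
    and red: "reduced p q (?H @ L)"
    using positive_word_mult_nf_elt[OF reduced_h_syllables[OF XY(1,2)] _ L] cls_h_syllables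
    by (auto simp: h_syllables_def)
  have wA: "\<forall>l\<in>set (syllables_word ?H). fst l \<noteq> A" using XY by (auto simp: syllables_word_h_syllables)
  obtain L' where L': "reduced p q L'" "nf_elt (k, L) \<cdot> hxy X Y i = nf_elt (k, L')"
    "L' = L @ ?H \<or> length L' < length L + length (syllables_word ?H)"
    using nf_elt_mult_stable_word[OF L(1) wA, where k = k] unfolding plain_syllables_h_syllables cls_h_syllables .
  have eq: "(k, L') = (rel_exp_prod ?H * k, ?H @ L)"
    using nf_elt_inj[of "(k, L')" "(rel_exp_prod ?H * k, ?H @ L)"] L'(1,2) red comm left by simp
  then have c: "?H @ L = L @ ?H" using L'(3) by (auto simp: syllables_word_h_syllables)
  obtain n where n: "L = concat (replicate n ?H)"
    using append_commute_unbordered[OF c] h_syllables_unbordered[OF _ _ XY(3)]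
    by (auto simp: h_syllables_def)
  have "rel_exp_prod ?H > 1" by (rule rel_exp_prod_gt1) (simp add: h_syllables_def)
  then have "k = 0" using eq by (metis mult_cancel_right1 order_less_irrefl prod.inject)
  then have "nf_elt (k, L) = hxy X Y i [^]\<^bsub>GG\<^esub> n"
    using n by (simp add: nf_elt_eq cls_syllables_word_power cls_h_syllables)
  then show ?thesis ..
qed

lemma commuting_nf_elt_negative:
  assumes XY: "X \<noteq> A" "Y \<noteq> A" "X \<noteq> Y"
    and L: "reduced p q L" "L \<noteq> []" "\<not> fst (snd (hd L))"
    and comm: "nf_elt (k, L) \<cdot> hxy X Y i = hxy X Y i \<cdot> nf_elt (k, L)"
  shows "\<exists>n::nat. nf_elt (k, L) = ginv (hxy X Y i) [^]\<^bsub>GG\<^esub> n"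
proof -
  let ?C = "h_inv_syllables X Y i"
  have comm': "ginv (hxy X Y i) \<cdot> nf_elt (k, L) = nf_elt (k, L) \<cdot> ginv (hxy X Y i)"
  proof -
    have "ginv (hxy X Y i) \<cdot> nf_elt (k, L)
        = ginv (hxy X Y i) \<cdot> (nf_elt (k, L) \<cdot> hxy X Y i) \<cdot> ginv (hxy X Y i)"
      by (simp add: G.m_assoc)
    then show ?thesis by (simp add: comm G.m_assoc)
  qed
  have "\<forall>x\<in>set ?C. snd x = (False, 0) \<and> fst x \<noteq> A" using XY by (auto simp: h_inv_syllables_def)
  then obtain k' D where D: "ginv (hxy X Y i) \<cdot> nf_elt (k, L) = nf_elt (k', D @ L)"
    "reduced p q (D @ L)" "map fst D = map fst ?C" "D = ?C \<longrightarrow> k = rel_exp_prod ?C * k'"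
    using negative_word_mult_nf_elt[OF _ L(1)] L(3) cls_h_inv_syllables by metis
  have wA: "\<forall>l\<in>set (syllables_word ?C). fst l \<noteq> A" using XY by (auto simp: syllables_word_h_inv_syllables)
  obtain L' where L': "reduced p q L'" "nf_elt (k, L) \<cdot> ginv (hxy X Y i) = nf_elt (k, L')"
    "L' = L @ ?C \<or> length L' < length L + length (syllables_word ?C)"
    using nf_elt_mult_stable_word[OF L(1) wA, where k = k] unfolding plain_syllables_h_inv_syllables cls_h_inv_syllables .
  have eq: "(k, L') = (k', D @ L)"
    using nf_elt_inj[of "(k, L')" "(k', D @ L)"] L'(1,2) D(1,2) comm' by simp
  have lD: "length D = length ?C" using D(3) by (metis length_map)
  then have c: "D @ L = L @ ?C" using L'(3) eq by (auto simp: syllables_word_h_inv_syllables)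
  have "D \<noteq> []" using lD by auto
  then obtain n where n: "L = concat (replicate n D)" and nD: "0 < n \<longrightarrow> D = ?C"
    using append_commute_unbordered[OF c lD] h_inv_syllables_unbordered[OF _ _ XY(3) D(3)] lD
    by auto
  have "n > 0" using n L(2) by (cases n) auto
  then have DC: "D = ?C" using nD by simp
  have "rel_exp_prod ?C > 1" by (rule rel_exp_prod_gt1) (simp add: h_inv_syllables_def)
  moreover have "k = rel_exp_prod ?C * k" using D(4) DC eq by simp
  ultimately have "k = 0" by (metis mult_cancel_right1 order_less_irrefl)
  then have "nf_elt (k, L) = ginv (hxy X Y i) [^]\<^bsub>GG\<^esub> n"
    using n DC by (simp add: nf_elt_eq cls_syllables_word_power cls_h_inv_syllables)
  then show ?thesis ..
qed

lemma centraliser_hxy: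
  assumes "X \<noteq> A" "Y \<noteq> A" "X \<noteq> Y" "g \<in> carrier GG" "g \<cdot> hxy X Y i = hxy X Y i \<cdot> g"
  shows "\<exists>n::int. g = hxy X Y i [^]\<^bsub>GG\<^esub> n"
proof -
  obtain k L where L: "reduced p q L" and g: "g = nf_elt (k, L)"
    using nf_elt_exists[OF assms(4)] by (metis prod.collapse)
  show ?thesis
  proof (cases "L = [] \<or> fst (snd (hd L))")
    case True
    then show ?thesis
      using commuting_nf_elt_positive[OF assms(1-3) L True] assms(5) g by (metis int_pow_int)
  next
    case False
    then obtain n :: nat where "g = ginv (hxy X Y i) [^]\<^bsub>GG\<^esub> n"
      using commuting_nf_elt_negative[OF assms(1-3) L] assms(5) g by blast
    then have "g = hxy X Y i [^]\<^bsub>GG\<^esub> (- int n)"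
      by (simp add: G.int_pow_neg_int G.nat_pow_inv)
    then show ?thesis by blast
  qed
qed

end

section \<open>Positive powers of \<open>X Y\<^sup>i\<close>\<close>

lemma concat_replicate_rotate:
  "[a] @ concat (replicate n (B @ [a])) = concat (replicate n ([a] @ B)) @ [a]"
  by (induction n) auto

lemma mon_gen_subset_carrier:
  fixes G (structure)
  assumes "monoid G" "X \<subseteq> carrier G"
  shows "mon_gen G X \<subseteq> carrier G"
proof
  fix x assume "x \<in> mon_gen G X"
  then show "x \<in> carrier G"
    using assms by (induction rule: mon_gen.induct) (auto intro: monoid.m_closed monoid.one_closed)
qed

lemma mon_gen_singleton:
  fixes G (structure)
  assumes "monoid G" "c \<in> carrier G"
  shows "mon_gen G {c} = range (\<lambda>n::nat. c [^] n)"
proof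
  interpret monoid G by fact
  show "mon_gen G {c} \<subseteq> range (\<lambda>n::nat. c [^] n)"
  proof
    fix x assume "x \<in> mon_gen G {c}"
    then show "x \<in> range (\<lambda>n::nat. c [^] n)"
    proof (induction rule: mon_gen.induct)
      case one
      show ?case by (rule range_eqI[of _ _ 0]) simp
    next
      case (gen x)
      then show ?case using assms(2) by (intro range_eqI[of _ _ 1]) simp
    next
      case (mult x y)
      then obtain a b :: nat where "x = c [^] a" "y = c [^] b" by auto
      then show ?case using assms(2) by (intro range_eqI[of _ _ "a + b"]) (simp add: nat_pow_mult)
    qed
  qed
  show "range (\<lambda>n::nat. c [^] n) \<subseteq> mon_gen G {c}"
  proof clarify
    fix n :: nat
    show "c [^] n \<in> mon_gen G {c}"
      by (induction n) (auto intro: mon_gen.intros)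
  qed
qed

context bs_pair
begin

definition a_conj :: "word set \<Rightarrow> word set" where
  "a_conj g = g \<cdot> aa \<cdot> ginv g"

lemma a_conj_mult:
  "x \<in> carrier GG \<Longrightarrow> y \<in> carrier GG \<Longrightarrow> a_conj (x \<cdot> y) = x \<cdot> a_conj y \<cdot> ginv x"
  by (simp add: a_conj_def G.m_assoc G.inv_mult_group)

lemma conj_pow_iterate:
  assumes "c \<in> carrier GG" and "\<And>k::int. c \<cdot> aa [^]\<^bsub>GG\<^esub> k \<cdot> ginv c = aa [^]\<^bsub>GG\<^esub> (w * k)"
  shows "c [^]\<^bsub>GG\<^esub> (n::nat) \<cdot> aa [^]\<^bsub>GG\<^esub> (k::int) \<cdot> ginv (c [^]\<^bsub>GG\<^esub> n) = aa [^]\<^bsub>GG\<^esub> (w ^ n * k)"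
proof (induction n arbitrary: k)
  case (Suc n)
  have "c [^]\<^bsub>GG\<^esub> Suc n \<cdot> aa [^]\<^bsub>GG\<^esub> k \<cdot> ginv (c [^]\<^bsub>GG\<^esub> Suc n)
      = c [^]\<^bsub>GG\<^esub> n \<cdot> (c \<cdot> aa [^]\<^bsub>GG\<^esub> k \<cdot> ginv c) \<cdot> ginv (c [^]\<^bsub>GG\<^esub> n)"
    using assms(1) by (simp add: G.m_assoc G.inv_mult_group)
  also have "\<dots> = aa [^]\<^bsub>GG\<^esub> (w ^ n * (w * k))" by (simp add: assms(2) Suc)
  finally show ?case by (simp add: mult_ac)
qed simp

lemma a_conj_hxy_pow:
  assumes "X \<noteq> A" "Y \<noteq> A"
  shows "a_conj (hxy X Y i [^]\<^bsub>GG\<^esub> (n::nat)) = aa [^]\<^bsub>GG\<^esub> ((rel_exp p q X * rel_exp p q Y ^ i) ^ n)"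
proof -
  have Y: "gZ Y [^]\<^bsub>GG\<^esub> i \<cdot> aa [^]\<^bsub>GG\<^esub> (k::int) \<cdot> ginv (gZ Y [^]\<^bsub>GG\<^esub> i)
      = aa [^]\<^bsub>GG\<^esub> (rel_exp p q Y ^ i * k)" for k
    by (rule conj_pow_iterate) (simp_all add: stable_conj_a_pow[OF assms(2)])
  have "hxy X Y i \<cdot> aa [^]\<^bsub>GG\<^esub> (k::int) \<cdot> ginv (hxy X Y i)
      = aa [^]\<^bsub>GG\<^esub> (rel_exp p q X * rel_exp p q Y ^ i * k)" for k
  proof -
    have "hxy X Y i \<cdot> aa [^]\<^bsub>GG\<^esub> k \<cdot> ginv (hxy X Y i)
        = gZ X \<cdot> (gZ Y [^]\<^bsub>GG\<^esub> i \<cdot> aa [^]\<^bsub>GG\<^esub> k \<cdot> ginv (gZ Y [^]\<^bsub>GG\<^esub> i)) \<cdot> ginv (gZ X)"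
      by (simp add: hxy_def G.m_assoc G.inv_mult_group)
    then show ?thesis by (simp add: Y stable_conj_a_pow[OF assms(1)] mult.assoc)
  qed
  from conj_pow_iterate[OF hxy_in_carrier this, of n 1] show ?thesis
    by (simp add: a_conj_def)
qed

text \<open>\<open>keeps_relator Y g\<close> says that \<open>g\<^sup>-\<^sup>1 Y g\<close>, like \<open>Y\<close>, conjugates \<open>a\<close> to \<open>a\<^bsup>e(Y)\<^esup>\<close>.  Among the
  powers of \<open>X Y\<^sup>i\<close> it singles out the non-negative ones.\<close>

definition keeps_relator :: "gen \<Rightarrow> word set \<Rightarrow> bool" where
  "keeps_relator Y g \<longleftrightarrow> gZ Y \<cdot> a_conj g \<cdot> ginv (gZ Y) = g \<cdot> aa [^]\<^bsub>GG\<^esub> rel_exp p q Y \<cdot> ginv g"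

lemma keeps_relator_if_a_conj_in_a:
  assumes "Y \<noteq> A" "g \<in> carrier GG" "a_conj g = aa [^]\<^bsub>GG\<^esub> (M::int)"
  shows "keeps_relator Y g"
proof -
  have "gZ Y \<cdot> a_conj g \<cdot> ginv (gZ Y) = (aa [^]\<^bsub>GG\<^esub> M) [^]\<^bsub>GG\<^esub> rel_exp p q Y"
    by (simp add: assms(3) stable_conj_a_pow[OF assms(1)] G.int_pow_pow mult.commute)
  also have "\<dots> = g \<cdot> aa [^]\<^bsub>GG\<^esub> rel_exp p q Y \<cdot> ginv g"
    using assms(2,3) by (simp add: a_conj_def G.conj_int_pow)
  finally show ?thesis by (simp add: keeps_relator_def)
qed

definition h_inv_rotated :: "gen \<Rightarrow> gen \<Rightarrow> nat \<Rightarrow> syllable list" where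
  "h_inv_rotated X Y i = (X, False, 0) # replicate i (Y, False, 0)"

text \<open>The normal form of \<open>h\<^bsup>m+1\<^esup> Y h\<^bsup>-m-1\<^esup>\<close> for \<open>h = X Y\<^sup>i\<close>, without its last syllable \<open>X\<^sup>-\<^sup>1\<close>.\<close>

definition conj_syllables :: "gen \<Rightarrow> gen \<Rightarrow> nat \<Rightarrow> nat \<Rightarrow> syllable list" where
  "conj_syllables X Y i m = concat (replicate m (h_syllables X Y i)) @ [(X, True, 0), (Y, True, 0)] @
     concat (replicate m (h_inv_rotated X Y i))"

lemma reduced_conj_syllables:
  assumes "X \<noteq> A" "Y \<noteq> A" "X \<noteq> Y" "0 \<le> c" "c \<le> 1"
  shows "reduced p q (conj_syllables X Y i m @ [(X, False, c)])"
proof -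
  let ?P = "concat (replicate m (h_syllables X Y i)) @ [(X, True, 0), (Y, True, 0)]"
  let ?N = "concat (replicate m (h_inv_rotated X Y i)) @ [(X, False, c)]"
  have "reduced p q ?P" using assms by (intro reduced_if_all_positive) (auto simp: h_syllables_def)
  moreover have "reduced p q ?N"
    using assms rel_exp_ge2[of X] rel_exp_pos[of Y]
    by (intro reduced_if_all_negative) (auto simp: h_inv_rotated_def)
  moreover have "reduced_pair (last ?P) (hd ?N)"
    using assms(3) by (cases m) (simp_all add: h_inv_rotated_def)
  ultimately have "reduced p q (?P @ ?N)"
    unfolding reduced_append[of p q ?P ?N] by blast
  then show ?thesis by (simp add: conj_syllables_def)
qed

lemma nf_elt_conj_syllables:
  assumes "Y \<noteq> A"
  shows "nf_elt (0, conj_syllables X Y i m @ [(X, False, 0)]) =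
    hxy X Y i [^]\<^bsub>GG\<^esub> Suc m \<cdot> gZ Y \<cdot> ginv (hxy X Y i [^]\<^bsub>GG\<^esub> Suc m)"
proof -
  let ?h = "hxy X Y i" and ?hm = "hxy X Y i [^]\<^bsub>GG\<^esub> m"
  have "conj_syllables X Y i m @ [(X, False, 0)] =
      concat (replicate m (h_syllables X Y i)) @ [(X, True, 0), (Y, True, 0), (X, False, 0)] @
      concat (replicate m (h_inv_syllables X Y i))"
    using concat_replicate_rotate[of "(X, False, 0)" m "replicate i (Y, False, 0)", symmetric]
    by (simp add: conj_syllables_def h_inv_rotated_def h_inv_syllables_def)
  then have "syllables_word (conj_syllables X Y i m @ [(X, False, 0)]) =
      syllables_word (concat (replicate m (h_syllables X Y i))) @ [(X, True), (Y, True), (X, False)] @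
      syllables_word (concat (replicate m (h_inv_syllables X Y i)))"
    by simp
  moreover have "cls p q (B @ [(X, True), (Y, True), (X, False)] @ C)
      = cls p q B \<cdot> (gZ X \<cdot> gZ Y \<cdot> ginv (gZ X)) \<cdot> cls p q C" for B C
    by (simp add: cls_append[symmetric] cls_inv_letter[symmetric])
  ultimately have "nf_elt (0, conj_syllables X Y i m @ [(X, False, 0)]) = ?hm \<cdot> (gZ X \<cdot> gZ Y \<cdot> ginv (gZ X)) \<cdot> ginv ?hm"
    by (simp add: nf_elt_eq cls_syllables_word_power cls_h_syllables cls_h_inv_syllables G.nat_pow_inv)
  also have "gZ X \<cdot> gZ Y \<cdot> ginv (gZ X) = ?h \<cdot> gZ Y \<cdot> ginv ?h"
  proof -
    have "gZ Y [^]\<^bsub>GG\<^esub> i \<cdot> gZ Y = gZ Y \<cdot> gZ Y [^]\<^bsub>GG\<^esub> i"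
      by (metis G.nat_pow_Suc G.nat_pow_Suc2 cls_in_carrier)
    then have "?h \<cdot> gZ Y \<cdot> ginv ?h
        = gZ X \<cdot> (gZ Y \<cdot> gZ Y [^]\<^bsub>GG\<^esub> i) \<cdot> ginv (gZ Y [^]\<^bsub>GG\<^esub> i) \<cdot> ginv (gZ X)"
      by (simp add: hxy_def G.m_assoc G.inv_mult_group)
    then show ?thesis by (simp add: G.m_assoc)
  qed
  finally show ?thesis by (simp add: G.m_assoc G.inv_mult_group)
qed

text \<open>If \<open>u = h\<^bsup>m+1\<^esup> Y h\<^bsup>-m-1\<^esup>\<close> satisfied \<open>u a u\<^sup>-\<^sup>1 = a\<^bsup>e(Y)\<^esup>\<close>, the normal forms of \<open>u a\<close> and
  \<open>a\<^bsup>e(Y)\<^esup> u\<close> would coincide; they differ in the power of \<open>a\<close> after the last syllable.\<close>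

lemma not_keeps_relator_inv_hxy_pow:
  assumes XY: "X \<noteq> A" "Y \<noteq> A" "X \<noteq> Y"
  shows "\<not> keeps_relator Y (ginv (hxy X Y i [^]\<^bsub>GG\<^esub> Suc m))"
proof
  let ?hm = "hxy X Y i [^]\<^bsub>GG\<^esub> Suc m"
  let ?u = "?hm \<cdot> gZ Y \<cdot> ginv ?hm"
  let ?e = "aa [^]\<^bsub>GG\<^esub> rel_exp p q Y"
  let ?U = "conj_syllables X Y i m"
  assume "keeps_relator Y (ginv ?hm)"
  then have "?hm \<cdot> (gZ Y \<cdot> a_conj (ginv ?hm) \<cdot> ginv (gZ Y)) \<cdot> ginv ?hm = ?e"
    by (simp add: keeps_relator_def G.m_assoc)
  then have "?u \<cdot> aa \<cdot> ginv ?u = ?e"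
    by (simp add: a_conj_def G.m_assoc G.inv_mult_group)
  then have ua: "?u \<cdot> aa = ?e \<cdot> ?u"
    by (metis G.inv_solve_right G.m_closed G.inv_closed cls_in_carrier hxy_in_carrier
        G.nat_pow_closed G.int_pow_closed)
  have "nf_elt (0, ?U @ [(X, False, 1)]) = nf_elt (0, ?U @ [(X, False, 0)]) \<cdot> aa"
    by (simp add: nf_elt_eq cls_append cls_Cons[of _ "[_]"] cls_inv_letter G.m_assoc)
  also have "\<dots> = ?e \<cdot> nf_elt (0, ?U @ [(X, False, 0)])"
    by (simp only: nf_elt_conj_syllables[OF XY(2)] ua)
  also have "\<dots> = nf_elt (rel_exp p q Y, ?U @ [(X, False, 0)])"
    by (simp add: nf_elt_eq)
  finally have "(0, ?U @ [(X, False, 1)]) = (rel_exp p q Y, ?U @ [(X, False, 0)])"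
    using nf_elt_inj[of "(0, ?U @ [(X, False, 1)])" "(rel_exp p q Y, ?U @ [(X, False, 0)])"]
      reduced_conj_syllables[OF XY] by simp
  then show False by simp
qed

lemma hxy_pow_iff:
  assumes XY: "X \<noteq> A" "Y \<noteq> A" "X \<noteq> Y" and g: "g \<in> carrier GG"
  shows "g \<cdot> hxy X Y i = hxy X Y i \<cdot> g \<and> keeps_relator Y g \<longleftrightarrow> (\<exists>n::nat. g = hxy X Y i [^]\<^bsub>GG\<^esub> n)"
proof
  assume h: "g \<cdot> hxy X Y i = hxy X Y i \<cdot> g \<and> keeps_relator Y g"
  obtain n :: int where n: "g = hxy X Y i [^]\<^bsub>GG\<^esub> n"
    using centraliser_hxy[OF XY g] h by blast
  show "\<exists>n::nat. g = hxy X Y i [^]\<^bsub>GG\<^esub> n"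
  proof (cases "n \<ge> 0")
    case True
    then show ?thesis using n by (intro exI[of _ "nat n"]) (simp add: pow_nat)
  next
    case False
    then obtain m where "nat (- n) = Suc m" by (cases "nat (- n)") auto
    then have "g = ginv (hxy X Y i [^]\<^bsub>GG\<^esub> Suc m)"
      using n False by (simp add: int_pow_def2 del: pow_nat)
    then show ?thesis using not_keeps_relator_inv_hxy_pow[OF XY, of i m] h by simp
  qed
next
  assume "\<exists>n::nat. g = hxy X Y i [^]\<^bsub>GG\<^esub> n"
  then obtain n :: nat where n: "g = hxy X Y i [^]\<^bsub>GG\<^esub> n" by blast
  then have "g \<cdot> hxy X Y i = hxy X Y i \<cdot> g"
    by (metis G.nat_pow_Suc G.nat_pow_Suc2 hxy_in_carrier)
  moreover have "keeps_relator Y g"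
    using n a_conj_hxy_pow[OF XY(1,2)] by (intro keeps_relator_if_a_conj_in_a[OF XY(2)]) simp_all
  ultimately show "g \<cdot> hxy X Y i = hxy X Y i \<cdot> g \<and> keeps_relator Y g" ..
qed

lemma mon_gen_hxy: "mon_gen GG {hxy X Y i} = range (\<lambda>n::nat. hxy X Y i [^]\<^bsub>GG\<^esub> n)"
  by (rule mon_gen_singleton) (simp_all add: G.monoid_axioms)

end

section \<open>Conjugating \<open>a\<close> by elements of \<open>Mon\<langle>s, t\<rangle>\<close>\<close>

lemma prime_powers_mult_eq_iff:
  fixes p q :: "'a :: factorial_semiring"
  assumes "prime p" "prime q" "p \<noteq> q"
  shows "p ^ a * q ^ b = p ^ c * q ^ d \<longleftrightarrow> a = c \<and> b = d"
proof
  have mult: "multiplicity p (p ^ m * q ^ n) = m" "multiplicity q (p ^ m * q ^ n) = n" for m n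
    using assms by (simp_all add: prime_elem_multiplicity_mult_distrib multiplicity_distinct_prime_power)
  assume "p ^ a * q ^ b = p ^ c * q ^ d"
  then show "a = c \<and> b = d" using mult by metis
qed simp

locale distinct_primes =
  fixes p q :: nat
  assumes prime_p: "prime p" and prime_q: "prime q" and p_neq_q: "p \<noteq> q"

sublocale distinct_primes \<subseteq> bs_pair
  using prime_p prime_q by unfold_locales (simp_all add: prime_ge_2_nat)

context bs_pair
begin

abbreviation Mon_st where "Mon_st \<equiv> mon_gen GG {gZ S, gZ T}"

lemma Mon_st_subset_carrier: "Mon_st \<subseteq> carrier GG"
  by (rule mon_gen_subset_carrier) (simp_all add: G.monoid_axioms)

lemma stable_pow_mult_in_Mon_st:
  assumes "Z \<in> {S, T}" "x \<in> Mon_st"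
  shows "gZ Z [^]\<^bsub>GG\<^esub> (j::nat) \<cdot> x \<in> Mon_st"
proof -
  have "gZ Z [^]\<^bsub>GG\<^esub> j \<in> Mon_st"
    using assms(1) by (induction j) (auto intro: mon_gen.intros)
  then show ?thesis using assms(2) by (rule mon_gen.mult)
qed

lemma expsum_mult:
  assumes "X \<noteq> A" "g \<in> carrier GG" "h \<in> carrier GG"
  shows "expsum X (g \<cdot> h) = expsum X g + expsum X h"
proof -
  obtain u v where "g = cls p q u" "h = cls p q v" using assms by (auto simp: carrier_Gpres)
  then show ?thesis using assms(1) by (simp add: mult_cls expsum_cls)
qed

lemma expsum_one [simp]: "X \<noteq> A \<Longrightarrow> expsum X gone = 0"
  by (simp add: one_Gpres expsum_cls)

lemma expsum_stable_pow:
  assumes "X \<noteq> A"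
  shows "expsum X (gZ Z [^]\<^bsub>GG\<^esub> (n::nat)) = (if X = Z then int n else 0)"
proof (induction n)
  case (Suc n)
  then show ?case using assms by (simp add: expsum_mult expsum_cls)
qed (use assms in simp)

lemma a_conj_Mon_st:
  assumes "g \<in> Mon_st"
  shows "\<exists>m n :: nat. expsum S g = int m \<and> expsum T g = int n \<and>
    a_conj g = aa [^]\<^bsub>GG\<^esub> (rel_exp p q S ^ m * rel_exp p q T ^ n)"
  using assms
proof (induction rule: mon_gen.induct)
  case one
  then show ?case by (intro exI[of _ 0]) (simp add: a_conj_def)
next
  case (gen x)
  then consider "x = gZ S" | "x = gZ T" by blast
  then show ?case
  proof cases
    case 1
    then show ?thesis using stable_conj_a[of S]
      by (intro exI[of _ 1] exI[of _ 0]) (simp add: a_conj_def expsum_cls)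
  next
    case 2
    then show ?thesis using stable_conj_a[of T]
      by (intro exI[of _ 0] exI[of _ 1]) (simp add: a_conj_def expsum_cls)
  qed
next
  case (mult x y)
  have xy: "x \<in> carrier GG" "y \<in> carrier GG"
    using mult.hyps Mon_st_subset_carrier by auto
  from mult.IH obtain m1 n1 m2 n2 :: nat where
    x: "expsum S x = int m1" "expsum T x = int n1"
      "a_conj x = aa [^]\<^bsub>GG\<^esub> (rel_exp p q S ^ m1 * rel_exp p q T ^ n1)" and
    y: "expsum S y = int m2" "expsum T y = int n2"
      "a_conj y = aa [^]\<^bsub>GG\<^esub> (rel_exp p q S ^ m2 * rel_exp p q T ^ n2)"
    by blast
  have "a_conj (x \<cdot> y) = (x \<cdot> aa \<cdot> ginv x) [^]\<^bsub>GG\<^esub> (rel_exp p q S ^ m2 * rel_exp p q T ^ n2)"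
    using xy by (simp add: a_conj_mult y(3) G.conj_int_pow)
  also have "\<dots> = aa [^]\<^bsub>GG\<^esub> (rel_exp p q S ^ (m1 + m2) * rel_exp p q T ^ (n1 + n2))"
    using x(3) by (simp add: a_conj_def G.int_pow_pow power_add mult_ac)
  finally show ?case using x y xy
    by (intro exI[of _ "m1 + m2"] exI[of _ "n1 + n2"]) (simp add: expsum_mult)
qed

text \<open>Multiplying by powers of one stable letter \<open>Z\<close> absorbs any difference in the exponent sums
  of \<open>Z\<close>, so what \<open>a_conj\<close> still detects is the exponent sum of the other letter.\<close>

definition shift_conj_eq :: "gen \<Rightarrow> word set \<Rightarrow> word set \<Rightarrow> bool" where
  "shift_conj_eq Z x y \<longleftrightarrow> (\<exists>(j::nat) (j'::nat). a_conj (gZ Z [^]\<^bsub>GG\<^esub> j \<cdot> x) = a_conj (gZ Z [^]\<^bsub>GG\<^esub> j' \<cdot> y))"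

end

context distinct_primes
begin

lemma a_conj_eq_iff:
  assumes "g \<in> Mon_st" "h \<in> Mon_st"
  shows "a_conj g = a_conj h \<longleftrightarrow> expsum S g = expsum S h \<and> expsum T g = expsum T h"
proof -
  obtain m1 n1 m2 n2 :: nat where
    g: "expsum S g = int m1" "expsum T g = int n1"
      "a_conj g = aa [^]\<^bsub>GG\<^esub> (int p ^ m1 * int q ^ n1)" and
    h: "expsum S h = int m2" "expsum T h = int n2"
      "a_conj h = aa [^]\<^bsub>GG\<^esub> (int p ^ m2 * int q ^ n2)"
    using a_conj_Mon_st[OF assms(1)] a_conj_Mon_st[OF assms(2)] by (auto simp: rel_exp_def)
  have "a_conj g = a_conj h \<longleftrightarrow> int p ^ m1 * int q ^ n1 = int p ^ m2 * int q ^ n2"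
    using g(3) h(3) a_pow_inj by metis
  also have "\<dots> \<longleftrightarrow> m1 = m2 \<and> n1 = n2"
    using prime_p prime_q p_neq_q by (intro prime_powers_mult_eq_iff) simp_all
  finally show ?thesis using g h by simp
qed

lemma shift_conj_eq_iff:
  assumes ZW: "{Z, W} = {S, T}" and xy: "x \<in> Mon_st" "y \<in> Mon_st"
  shows "shift_conj_eq Z x y \<longleftrightarrow> expsum W x = expsum W y"
proof -
  have Z: "Z \<in> {S, T}" "Z \<noteq> A" and W: "W \<noteq> A" "W \<noteq> Z" using ZW by (auto simp: doubleton_eq_iff)
  have carr: "x \<in> carrier GG" "y \<in> carrier GG" using xy Mon_st_subset_carrier by auto
  have expsum_shift: "expsum X (gZ Z [^]\<^bsub>GG\<^esub> j \<cdot> x) = (if X = Z then int j else 0) + expsum X x"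
    if "X \<noteq> A" "x \<in> carrier GG" for X j x
    using that by (simp add: expsum_mult expsum_stable_pow)
  have a_conj_shift: "a_conj (gZ Z [^]\<^bsub>GG\<^esub> j \<cdot> x) = a_conj (gZ Z [^]\<^bsub>GG\<^esub> j' \<cdot> y) \<longleftrightarrow>
      int j + expsum Z x = int j' + expsum Z y \<and> expsum W x = expsum W y" for j j'
    using a_conj_eq_iff[OF stable_pow_mult_in_Mon_st[OF Z(1) xy(1)] stable_pow_mult_in_Mon_st[OF Z(1) xy(2)]]
      ZW carr expsum_shift[OF W(1)] expsum_shift[OF Z(2)]
    by (auto simp: doubleton_eq_iff)
  obtain mx my :: nat where m: "expsum Z x = int mx" "expsum Z y = int my"
    using a_conj_Mon_st[OF xy(1)] a_conj_Mon_st[OF xy(2)] Z(1) by auto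
  show ?thesis
    unfolding shift_conj_eq_def a_conj_shift
  proof
    assume "expsum W x = expsum W y"
    moreover have "int my + expsum Z x = int mx + expsum Z y" using m by simp
    ultimately show "\<exists>j j'. int j + expsum Z x = int j' + expsum Z y \<and> expsum W x = expsum W y"
      by blast
  qed auto
qed

end

fun eqletter_inv :: "nat \<Rightarrow> nat \<Rightarrow> 'v eqletter \<Rightarrow> 'v eqletter" where
  "eqletter_inv p q (Cst c) = Cst (inv\<^bsub>Gpres p q\<^esub> c)"
| "eqletter_inv p q (Var v) = InvVar v"
| "eqletter_inv p q (InvVar v) = Var v"

definition equation_inv :: "nat \<Rightarrow> nat \<Rightarrow> 'v equation \<Rightarrow> 'v equation" where
  "equation_inv p q w = rev (map (eqletter_inv p q) w)"

text \<open>The equation \<open>l = r\<close>, written as \<open>l r\<^sup>-\<^sup>1 = 1\<close>.\<close>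

definition equate :: "nat \<Rightarrow> nat \<Rightarrow> 'v equation \<Rightarrow> 'v equation \<Rightarrow> 'v equation" where
  "equate p q l r = l @ equation_inv p q r"

definition eq_vars :: "'v equation \<Rightarrow> 'v set" where
  "eq_vars w = {v. Var v \<in> set w \<or> InvVar v \<in> set w}"

lemma finite_eq_vars: "finite (eq_vars w)"
proof -
  have "eq_vars w \<subseteq> (\<lambda>l. case l of Var v \<Rightarrow> v | InvVar v \<Rightarrow> v | Cst c \<Rightarrow> undefined) ` set w"
    unfolding eq_vars_def by (force split: eqletter.splits)
  then show ?thesis by (rule finite_subset) simp
qed

lemma eval_eq_Nil [simp]: "eval_eq p q \<phi> [] = \<one>\<^bsub>Gpres p q\<^esub>"
  by (simp add: eval_eq_def)

lemma eval_eq_Cons [simp]: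
  "eval_eq p q \<phi> (l # w) = eval_letter p q \<phi> l \<otimes>\<^bsub>Gpres p q\<^esub> eval_eq p q \<phi> w"
  by (simp add: eval_eq_def)

lemma eval_eq_rename: "eval_eq p q \<phi> (map (map_eqletter f) w) = eval_eq p q (\<phi> \<circ> f) w"
proof (induction w)
  case (Cons l w)
  then show ?case by (cases l) simp_all
qed simp

lemma eval_eq_cong:
  assumes "\<forall>v\<in>eq_vars w. \<phi> v = \<phi>' v"
  shows "eval_eq p q \<phi> w = eval_eq p q \<phi>' w"
  using assms
proof (induction w)
  case (Cons l w)
  then show ?case by (cases l) (auto simp: eq_vars_def)
qed simp

lemma consts_ok_Nil [simp]: "consts_ok p q []"
  by (simp add: consts_ok_def)

lemma consts_ok_Cons [simp]:
  "consts_ok p q (l # w) \<longleftrightarrow> (\<forall>c. l = Cst c \<longrightarrow> c \<in> carrier (Gpres p q)) \<and> consts_ok p q w"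
  by (auto simp: consts_ok_def)

lemma consts_ok_append [simp]: "consts_ok p q (u @ w) \<longleftrightarrow> consts_ok p q u \<and> consts_ok p q w"
  by (auto simp: consts_ok_def)

lemma consts_ok_rename [simp]: "consts_ok p q (map (map_eqletter f) w) \<longleftrightarrow> consts_ok p q w"
proof (induction w)
  case (Cons l w)
  then show ?case by (cases l) simp_all
qed simp

lemma consts_ok_equation_inv [simp]: "consts_ok p q w \<Longrightarrow> consts_ok p q (equation_inv p q w)"
proof (induction w)
  case (Cons l w)
  then show ?case
    by (cases l) (auto simp: equation_inv_def group.inv_closed[OF group_Gpres])
qed (simp add: equation_inv_def)

lemma consts_ok_equate [simp]: "consts_ok p q l \<Longrightarrow> consts_ok p q r \<Longrightarrow> consts_ok p q (equate p q l r)"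
  by (simp add: equate_def)

lemma solves_rename:
  "solves p q \<phi> (map (map (map_eqletter f)) F) \<longleftrightarrow>
    (\<forall>v. \<phi> v \<in> carrier (Gpres p q)) \<and> solves p q (\<phi> \<circ> f) F"
  by (simp add: solves_def eval_eq_rename) blast

lemma solves_append: "solves p q \<phi> (E @ F) \<longleftrightarrow> solves p q \<phi> E \<and> solves p q \<phi> F"
  by (auto simp: solves_def)

lemma eq_definableI:
  fixes E :: "nat equation list" and xs :: "nat list"
  assumes "\<forall>f\<in>set E. consts_ok p q f" "length xs = n" "D = {map \<phi> xs |\<phi>. solves p q \<phi> E}"
  shows "eq_definable p q n D"
  unfolding eq_definable_def using assms by blast

text \<open>Conjoining a system \<open>F\<close> whose variables \<open>0, 1\<close> are identified with the coordinates
  \<open>k, l\<close>; the other variables of \<open>F\<close> are moved past \<open>N\<close>, above all variables of \<open>E\<close>.\<close>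

lemma solutions_restrict:
  fixes E F :: "nat equation list" and xs :: "nat list"
  assumes kl: "k < length xs" "l < length xs"
    and below_N: "\<And>v. v \<in> set xs \<union> \<Union> (eq_vars ` set E) \<Longrightarrow> v < N"
  defines "ren \<equiv> \<lambda>j. if j = 0 then xs ! k else if j = 1 then xs ! l else N + j"
  shows "{e \<in> {map \<phi> xs |\<phi>. solves p q \<phi> E}. \<exists>\<psi>. solves p q \<psi> F \<and> \<psi> 0 = e ! k \<and> \<psi> 1 = e ! l}
    = {map \<phi> xs |\<phi>. solves p q \<phi> (E @ map (map (map_eqletter ren)) F)}"
proof (intro equalityI subsetI)
  fix d assume "d \<in> {e \<in> {map \<phi> xs |\<phi>. solves p q \<phi> E}. \<exists>\<psi>. solves p q \<psi> F \<and> \<psi> 0 = e ! k \<and> \<psi> 1 = e ! l}"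
  then obtain \<phi> \<psi> where d: "d = map \<phi> xs" "solves p q \<phi> E"
    and \<psi>: "solves p q \<psi> F" "\<psi> 0 = d ! k" "\<psi> 1 = d ! l"
    by blast
  define \<phi>' where "\<phi>' j = (if j < N then \<phi> j else \<psi> (j - N))" for j
  have "map \<phi>' xs = d" using d(1) below_N by (simp add: \<phi>'_def)
  moreover have "\<phi>' \<circ> ren = \<psi>"
  proof
    fix j
    show "(\<phi>' \<circ> ren) j = \<psi> j"
      using \<psi>(2,3) d(1) kl below_N[of "xs ! k"] below_N[of "xs ! l"] by (simp add: ren_def \<phi>'_def)
  qed
  moreover have "solves p q \<phi>' E"
  proof -
    have "eval_eq p q \<phi>' f = eval_eq p q \<phi> f" if "f \<in> set E" for f
      using that below_N by (intro eval_eq_cong) (auto simp: \<phi>'_def)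
    then show ?thesis using d(2) \<psi>(1) by (simp add: solves_def \<phi>'_def)
  qed
  ultimately have "d = map \<phi>' xs \<and> solves p q \<phi>' (E @ map (map (map_eqletter ren)) F)"
    using \<psi>(1) by (simp add: solves_append solves_rename) (simp add: solves_def)
  then show "d \<in> {map \<phi> xs |\<phi>. solves p q \<phi> (E @ map (map (map_eqletter ren)) F)}"
    by blast
next
  fix d assume "d \<in> {map \<phi> xs |\<phi>. solves p q \<phi> (E @ map (map (map_eqletter ren)) F)}"
  then obtain \<phi> where d: "d = map \<phi> xs" and "solves p q \<phi> (E @ map (map (map_eqletter ren)) F)"
    by blast
  then have "solves p q \<phi> E" "solves p q (\<phi> \<circ> ren) F"
    by (simp_all add: solves_append solves_rename)
  moreover have "(\<phi> \<circ> ren) 0 = d ! k" "(\<phi> \<circ> ren) 1 = d ! l"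
    using d kl by (simp_all add: ren_def)
  ultimately show "d \<in> {e \<in> {map \<phi> xs |\<phi>. solves p q \<phi> E}. \<exists>\<psi>. solves p q \<psi> F \<and> \<psi> 0 = e ! k \<and> \<psi> 1 = e ! l}"
    using d by blast
qed

lemma eq_definable_restrict:
  fixes F :: "nat equation list"
  assumes "eq_definable p q n E" "k < n" "l < n" "\<forall>f\<in>set F. consts_ok p q f"
  shows "eq_definable p q n {e \<in> E. \<exists>\<psi>. solves p q \<psi> F \<and> \<psi> 0 = e ! k \<and> \<psi> 1 = e ! l}"
proof -
  obtain E0 :: "nat equation list" and xs where E0: "\<forall>e\<in>set E0. consts_ok p q e" "length xs = n"
    "E = {map \<phi> xs |\<phi>. solves p q \<phi> E0}"
    using assms(1) unfolding eq_definable_def by blast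
  define N where "N = Suc (Max (set xs \<union> \<Union> (eq_vars ` set E0)))"
  define ren where "ren = (\<lambda>j. if j = 0 then xs ! k else if j = 1 then xs ! l else N + j)"
  have "finite (set xs \<union> \<Union> (eq_vars ` set E0))" by (simp add: finite_eq_vars)
  then have "v < N" if "v \<in> set xs \<union> \<Union> (eq_vars ` set E0)" for v
    using Max_ge[OF _ that] unfolding N_def by (simp add: le_imp_less_Suc)
  then have "{e \<in> E. \<exists>\<psi>. solves p q \<psi> F \<and> \<psi> 0 = e ! k \<and> \<psi> 1 = e ! l} =
      {map \<phi> xs |\<phi>. solves p q \<phi> (E0 @ map (map (map_eqletter ren)) F)}"
    unfolding E0(3) ren_def using E0(2) assms(2,3) by (intro solutions_restrict) simp_all
  moreover have "\<forall>f\<in>set (E0 @ map (map (map_eqletter ren)) F). consts_ok p q f"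
    using E0(1) assms(4) by auto
  ultimately show ?thesis by (intro eq_definableI[OF _ E0(2)])
qed

lemma eq_definable_restrict_iff:
  fixes F :: "nat equation list"
  assumes "eq_definable p q n E" "k < n" "l < n" "\<forall>f\<in>set F. consts_ok p q f"
    and "\<And>e. e \<in> E \<Longrightarrow> P e \<longleftrightarrow> (\<exists>\<psi>. solves p q \<psi> F \<and> \<psi> 0 = e ! k \<and> \<psi> 1 = e ! l)"
  shows "eq_definable p q n {e \<in> E. P e}"
proof -
  have "{e \<in> E. P e} = {e \<in> E. \<exists>\<psi>. solves p q \<psi> F \<and> \<psi> 0 = e ! k \<and> \<psi> 1 = e ! l}"
    by (rule Collect_cong) (use assms(5) in auto)
  then show ?thesis by (simp only: eq_definable_restrict[OF assms(1-4)])
qed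


context bs_pair
begin

lemma eval_letter_in_carrier:
  assumes "\<forall>v. \<phi> v \<in> carrier GG" "\<forall>c. l = Cst c \<longrightarrow> c \<in> carrier GG"
  shows "eval_letter p q \<phi> l \<in> carrier GG"
  using assms by (cases l) auto

lemma eval_eq_in_carrier:
  assumes "\<forall>v. \<phi> v \<in> carrier GG" "consts_ok p q w"
  shows "eval_eq p q \<phi> w \<in> carrier GG"
  using assms(2) by (induction w) (auto intro: eval_letter_in_carrier[OF assms(1)])

lemma eval_eq_append:
  assumes "\<forall>v. \<phi> v \<in> carrier GG" "consts_ok p q u" "consts_ok p q w"
  shows "eval_eq p q \<phi> (u @ w) = eval_eq p q \<phi> u \<cdot> eval_eq p q \<phi> w"
  using assms(2)
proof (induction u)
  case (Cons l u)
  then show ?case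
    using eval_letter_in_carrier[OF assms(1)] eval_eq_in_carrier[OF assms(1)] assms(3)
    by (simp add: G.m_assoc)
qed (simp add: eval_eq_in_carrier[OF assms(1,3)])

lemma eval_equation_inv:
  assumes "\<forall>v. \<phi> v \<in> carrier GG" "consts_ok p q w"
  shows "eval_eq p q \<phi> (equation_inv p q w) = ginv (eval_eq p q \<phi> w)"
  using assms(2)
proof (induction w)
  case (Cons l w)
  have l: "eval_letter p q \<phi> l \<in> carrier GG" "consts_ok p q [eqletter_inv p q l]"
    "eval_letter p q \<phi> (eqletter_inv p q l) = ginv (eval_letter p q \<phi> l)"
    using Cons.prems assms(1) by (cases l; simp)+
  have "eval_eq p q \<phi> (equation_inv p q (l # w)) = eval_eq p q \<phi> (equation_inv p q w @ [eqletter_inv p q l])"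
    by (simp add: equation_inv_def)
  also have "\<dots> = eval_eq p q \<phi> (equation_inv p q w) \<cdot> eval_eq p q \<phi> [eqletter_inv p q l]"
    using Cons.prems l(2) by (intro eval_eq_append[OF assms(1)]) simp_all
  also have "\<dots> = ginv (eval_eq p q \<phi> (l # w))"
    using Cons l eval_eq_in_carrier[OF assms(1)] by (simp add: G.inv_mult_group)
  finally show ?case .
qed (simp add: equation_inv_def)

lemma eval_equate_eq_one_iff:
  assumes "\<forall>v. \<phi> v \<in> carrier GG" "consts_ok p q l" "consts_ok p q r"
  shows "eval_eq p q \<phi> (equate p q l r) = gone \<longleftrightarrow> eval_eq p q \<phi> l = eval_eq p q \<phi> r"
  using assms eval_eq_in_carrier[OF assms(1)]
  by (simp add: equate_def eval_eq_append eval_equation_inv G.inv_solve_right')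

end

section \<open>The defining systems\<close>

lemma mon_gen_nat_pow:
  fixes G (structure)
  assumes "x \<in> mon_gen G X"
  shows "x [^] (n::nat) \<in> mon_gen G X"
  by (induction n) (auto intro: mon_gen.intros assms)

context bs_pair
begin

definition commute_eq :: "word set \<Rightarrow> nat \<Rightarrow> nat equation" where
  "commute_eq h v = equate p q [Var v, Cst h] [Cst h, Var v]"

definition keeps_relator_eq :: "gen \<Rightarrow> nat \<Rightarrow> nat equation" where
  "keeps_relator_eq Y v = equate p q [Cst (gZ Y), Var v, Cst aa, InvVar v, Cst (ginv (gZ Y))]
     [Var v, Cst (aa [^]\<^bsub>GG\<^esub> rel_exp p q Y), InvVar v]"

definition Mon_hxy_eqs :: "gen \<Rightarrow> gen \<Rightarrow> nat \<Rightarrow> nat \<Rightarrow> nat equation list" where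
  "Mon_hxy_eqs X Y i v = [commute_eq (hxy X Y i) v, keeps_relator_eq Y v]"

definition a_conj_eq :: "nat \<Rightarrow> nat \<Rightarrow> nat \<Rightarrow> nat \<Rightarrow> nat equation" where
  "a_conj_eq u x w y = equate p q [Var u, Var x, Cst aa, InvVar x, InvVar u]
     [Var w, Var y, Cst aa, InvVar y, InvVar w]"

definition shift_conj_eqs :: "gen \<Rightarrow> gen \<Rightarrow> nat \<Rightarrow> nat \<Rightarrow> nat \<Rightarrow> nat \<Rightarrow> nat equation list" where
  "shift_conj_eqs Z W x y v v' = Mon_hxy_eqs Z W 0 v @ Mon_hxy_eqs Z W 0 v' @ [a_conj_eq v x v' y]"

definition commute_s_mult_eq :: "nat \<Rightarrow> nat \<Rightarrow> nat equation" where
  "commute_s_mult_eq u v = equate p q [Var u, Cst (gZ S), Var v] [Cst (gZ S), Var v, Var u]"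

definition Mon_s_stable_pow_eqs :: "nat equation list" where
  "Mon_s_stable_pow_eqs = Mon_hxy_eqs T S 0 1 @ [commute_s_mult_eq 0 1, keeps_relator_eq T 0]"

definition expsum_S_T_eqs :: "nat equation list" where
  "expsum_S_T_eqs = Mon_hxy_eqs S T 1 2 @ shift_conj_eqs T S 0 2 3 4 @ shift_conj_eqs S T 2 1 5 6"

lemma consts_ok_Mon_hxy_eqs: "\<forall>f\<in>set (Mon_hxy_eqs X Y i v). consts_ok p q f"
  by (simp add: Mon_hxy_eqs_def commute_eq_def keeps_relator_eq_def)

lemma consts_ok_shift_conj_eqs: "\<forall>f\<in>set (shift_conj_eqs Z W x y v v'). consts_ok p q f"
  by (simp add: shift_conj_eqs_def Mon_hxy_eqs_def commute_eq_def keeps_relator_eq_def a_conj_eq_def)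

context
  fixes \<phi> :: "nat \<Rightarrow> word set"
  assumes carrier: "\<forall>u. \<phi> u \<in> carrier GG"
begin

lemma eval_commute_eq:
  "h \<in> carrier GG \<Longrightarrow> eval_eq p q \<phi> (commute_eq h v) = gone \<longleftrightarrow> \<phi> v \<cdot> h = h \<cdot> \<phi> v"
  unfolding commute_eq_def using carrier by (subst eval_equate_eq_one_iff) simp_all

lemma eval_keeps_relator_eq: "eval_eq p q \<phi> (keeps_relator_eq Y v) = gone \<longleftrightarrow> keeps_relator Y (\<phi> v)"
  unfolding keeps_relator_eq_def keeps_relator_def a_conj_def using carrier
  by (subst eval_equate_eq_one_iff) (simp_all add: G.m_assoc)

lemma eval_a_conj_eq:
  "eval_eq p q \<phi> (a_conj_eq u x w y) = gone \<longleftrightarrow> a_conj (\<phi> u \<cdot> \<phi> x) = a_conj (\<phi> w \<cdot> \<phi> y)"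
  unfolding a_conj_eq_def a_conj_def using carrier
  by (subst eval_equate_eq_one_iff) (simp_all add: G.m_assoc G.inv_mult_group)

lemma eval_commute_s_mult_eq:
  "eval_eq p q \<phi> (commute_s_mult_eq u v) = gone \<longleftrightarrow> \<phi> u \<cdot> (gZ S \<cdot> \<phi> v) = (gZ S \<cdot> \<phi> v) \<cdot> \<phi> u"
  unfolding commute_s_mult_eq_def using carrier
  by (subst eval_equate_eq_one_iff) (simp_all add: G.m_assoc)

lemma solves_iff_eval: "solves p q \<phi> F \<longleftrightarrow> (\<forall>f\<in>set F. eval_eq p q \<phi> f = gone)"
  using carrier by (simp add: solves_def)

lemma solves_Mon_hxy_eqs:
  assumes "X \<noteq> A" "Y \<noteq> A" "X \<noteq> Y"
  shows "solves p q \<phi> (Mon_hxy_eqs X Y i v) \<longleftrightarrow> (\<exists>n::nat. \<phi> v = hxy X Y i [^]\<^bsub>GG\<^esub> n)"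
  using hxy_pow_iff[OF assms] carrier
  by (simp add: solves_iff_eval Mon_hxy_eqs_def eval_commute_eq eval_keeps_relator_eq)

lemma solves_shift_conj_eqs:
  assumes "Z \<noteq> A" "W \<noteq> A" "Z \<noteq> W"
  shows "solves p q \<phi> (shift_conj_eqs Z W x y v v') \<longleftrightarrow>
    (\<exists>(j::nat) (j'::nat). \<phi> v = gZ Z [^]\<^bsub>GG\<^esub> j \<and> \<phi> v' = gZ Z [^]\<^bsub>GG\<^esub> j' \<and>
       a_conj (\<phi> v \<cdot> \<phi> x) = a_conj (\<phi> v' \<cdot> \<phi> y))"
  using solves_Mon_hxy_eqs[OF assms, of 0]
  by (auto simp: shift_conj_eqs_def solves_append solves_iff_eval eval_a_conj_eq)

lemma shift_conj_eq_if_solves: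
  assumes "Z \<noteq> A" "W \<noteq> A" "Z \<noteq> W" "solves p q \<phi> (shift_conj_eqs Z W x y v v')"
  shows "shift_conj_eq Z (\<phi> x) (\<phi> y)"
proof -
  obtain j j' :: nat where "\<phi> v = gZ Z [^]\<^bsub>GG\<^esub> j" "\<phi> v' = gZ Z [^]\<^bsub>GG\<^esub> j'"
    "a_conj (\<phi> v \<cdot> \<phi> x) = a_conj (\<phi> v' \<cdot> \<phi> y)"
    using assms(4) solves_shift_conj_eqs[OF assms(1-3)] by blast
  then have "a_conj (gZ Z [^]\<^bsub>GG\<^esub> j \<cdot> \<phi> x) = a_conj (gZ Z [^]\<^bsub>GG\<^esub> j' \<cdot> \<phi> y)" by simp
  then show ?thesis unfolding shift_conj_eq_def by blast
qed

lemma solves_Mon_s_stable_pow_eqs: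
  "solves p q \<phi> Mon_s_stable_pow_eqs \<longleftrightarrow>
    (\<exists>i n::nat. \<phi> 1 = gZ T [^]\<^bsub>GG\<^esub> i \<and> \<phi> 0 = hxy S T i [^]\<^bsub>GG\<^esub> n)"
proof -
  have "solves p q \<phi> Mon_s_stable_pow_eqs \<longleftrightarrow> (\<exists>i::nat. \<phi> 1 = gZ T [^]\<^bsub>GG\<^esub> i) \<and>
      \<phi> 0 \<cdot> (gZ S \<cdot> \<phi> 1) = (gZ S \<cdot> \<phi> 1) \<cdot> \<phi> 0 \<and> keeps_relator T (\<phi> 0)"
    using solves_Mon_hxy_eqs[of T S 0 1]
    by (simp add: Mon_s_stable_pow_eqs_def solves_append solves_iff_eval eval_commute_s_mult_eq
        eval_keeps_relator_eq)
  also have "\<dots> \<longleftrightarrow> (\<exists>i::nat. \<phi> 1 = gZ T [^]\<^bsub>GG\<^esub> i \<and>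
      \<phi> 0 \<cdot> hxy S T i = hxy S T i \<cdot> \<phi> 0 \<and> keeps_relator T (\<phi> 0))"
    by (auto simp only: hxy_def)
  also have "\<dots> \<longleftrightarrow> (\<exists>i n::nat. \<phi> 1 = gZ T [^]\<^bsub>GG\<^esub> i \<and> \<phi> 0 = hxy S T i [^]\<^bsub>GG\<^esub> n)"
    using hxy_pow_iff[of S T "\<phi> 0"] carrier by simp
  finally show ?thesis .
qed

lemma solves_expsum_S_T_eqs:
  "solves p q \<phi> expsum_S_T_eqs \<longleftrightarrow> (\<exists>n::nat. \<phi> 2 = hxy S T 1 [^]\<^bsub>GG\<^esub> n) \<and>
    (\<exists>(j::nat) (j'::nat). \<phi> 3 = gZ T [^]\<^bsub>GG\<^esub> j \<and> \<phi> 4 = gZ T [^]\<^bsub>GG\<^esub> j' \<and>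
      a_conj (\<phi> 3 \<cdot> \<phi> 0) = a_conj (\<phi> 4 \<cdot> \<phi> 2)) \<and>
    (\<exists>(j::nat) (j'::nat). \<phi> 5 = gZ S [^]\<^bsub>GG\<^esub> j \<and> \<phi> 6 = gZ S [^]\<^bsub>GG\<^esub> j' \<and>
      a_conj (\<phi> 5 \<cdot> \<phi> 2) = a_conj (\<phi> 6 \<cdot> \<phi> 1))"
  using solves_Mon_hxy_eqs[of S T 1 2] solves_shift_conj_eqs[of T S 0 2 3 4]
    solves_shift_conj_eqs[of S T 2 1 5 6]
  by (simp add: expsum_S_T_eqs_def solves_append)

end

lemma eq_definable_Mon_hxy:
  assumes "X \<noteq> A" "Y \<noteq> A" "X \<noteq> Y"
  shows "eq_definable p q 1 {[g] | g. g \<in> mon_gen GG {hxy X Y i}}"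
proof -
  have sol: "{[g] | g. g \<in> mon_gen GG {hxy X Y i}} = {map \<phi> [0] | \<phi>. solves p q \<phi> (Mon_hxy_eqs X Y i 0)}"
  proof (intro equalityI subsetI)
    fix d assume "d \<in> {[g] | g. g \<in> mon_gen GG {hxy X Y i}}"
    then obtain n :: nat where d: "d = map (\<lambda>_::nat. hxy X Y i [^]\<^bsub>GG\<^esub> n) [0]"
      by (auto simp: mon_gen_hxy)
    have "solves p q (\<lambda>_. hxy X Y i [^]\<^bsub>GG\<^esub> n) (Mon_hxy_eqs X Y i 0)"
      using solves_Mon_hxy_eqs[OF _ assms] by auto
    then show "d \<in> {map \<phi> [0] | \<phi>. solves p q \<phi> (Mon_hxy_eqs X Y i 0)}"
      unfolding d by blast
  next
    fix d assume "d \<in> {map \<phi> [0] | \<phi>. solves p q \<phi> (Mon_hxy_eqs X Y i 0)}"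
    then show "d \<in> {[g] | g. g \<in> mon_gen GG {hxy X Y i}}"
      using solves_Mon_hxy_eqs[OF _ assms] by (auto simp: mon_gen_hxy solves_def)
  qed
  then show ?thesis
    using eq_definableI[OF consts_ok_Mon_hxy_eqs _ sol] by simp
qed

lemma eq_definable_Mon_s_stable_pow:
  "eq_definable p q 2
     {[g, gZ T [^]\<^bsub>GG\<^esub> i] | g (i :: nat). g \<in> mon_gen GG {gZ S \<cdot> gZ T [^]\<^bsub>GG\<^esub> i}}"
proof -
  let ?D = "{[g, gZ T [^]\<^bsub>GG\<^esub> i] | g (i :: nat). g \<in> mon_gen GG {gZ S \<cdot> gZ T [^]\<^bsub>GG\<^esub> i}}"
  have "?D = {map \<phi> [0, 1] | \<phi>. solves p q \<phi> Mon_s_stable_pow_eqs}"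
  proof (intro equalityI subsetI)
    fix d assume "d \<in> ?D"
    then obtain i n :: nat where d: "d = [hxy S T i [^]\<^bsub>GG\<^esub> n, gZ T [^]\<^bsub>GG\<^esub> i]"
      using mon_gen_hxy[of S T] by (auto simp: hxy_def)
    define \<phi> :: "nat \<Rightarrow> word set" where "\<phi> = (\<lambda>_. gone)(0 := hxy S T i [^]\<^bsub>GG\<^esub> n, 1 := gZ T [^]\<^bsub>GG\<^esub> i)"
    have "\<forall>u. \<phi> u \<in> carrier GG" by (simp add: \<phi>_def)
    then have "solves p q \<phi> Mon_s_stable_pow_eqs" using solves_Mon_s_stable_pow_eqs by (auto simp: \<phi>_def)
    moreover have "d = map \<phi> [0, 1]" by (simp add: d \<phi>_def)
    ultimately show "d \<in> {map \<phi> [0, 1] | \<phi>. solves p q \<phi> Mon_s_stable_pow_eqs}" by blast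
  next
    fix d assume "d \<in> {map \<phi> [0, 1] | \<phi>. solves p q \<phi> Mon_s_stable_pow_eqs}"
    then obtain \<phi> where "d = [\<phi> 0, \<phi> 1]" "solves p q \<phi> Mon_s_stable_pow_eqs" by auto
    moreover from this(2) have "\<forall>u. \<phi> u \<in> carrier GG" by (simp add: solves_def)
    ultimately show "d \<in> ?D"
      using solves_Mon_s_stable_pow_eqs by (auto simp: mon_gen_hxy[of S T, unfolded hxy_def] hxy_def)
  qed
  moreover have "\<forall>f\<in>set Mon_s_stable_pow_eqs. consts_ok p q f"
    using consts_ok_Mon_hxy_eqs
    by (simp add: Mon_s_stable_pow_eqs_def commute_s_mult_eq_def keeps_relator_eq_def)
  ultimately show ?thesis
    using eq_definableI[where xs = "[0, 1]"] by simp
qed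

lemma expsum_nat_pow:
  assumes "X \<noteq> A" "g \<in> carrier GG"
  shows "expsum X (g [^]\<^bsub>GG\<^esub> (n::nat)) = int n * expsum X g"
  using assms by (induction n) (simp_all add: expsum_mult algebra_simps)

lemma expsum_hxy_pow:
  "expsum S (hxy S T i [^]\<^bsub>GG\<^esub> (n::nat)) = int n"
  "expsum T (hxy S T i [^]\<^bsub>GG\<^esub> (n::nat)) = int n * int i"
  by (simp_all add: expsum_nat_pow hxy_def expsum_mult expsum_cls)

lemma hxy_pow_in_Mon_st: "hxy S T 1 [^]\<^bsub>GG\<^esub> (n::nat) \<in> Mon_st"
  by (rule mon_gen_nat_pow) (simp add: hxy_def mon_gen.intros)

end

context distinct_primes
begin

lemma solvable_shift_conj_eqs_iff:
  assumes ZW: "{Z, W} = {S, T}" and xy: "x \<in> Mon_st" "y \<in> Mon_st"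
  shows "(\<exists>\<psi>. solves p q \<psi> (shift_conj_eqs Z W 0 1 2 3) \<and> \<psi> 0 = x \<and> \<psi> 1 = y) \<longleftrightarrow>
    expsum W x = expsum W y"
proof -
  have Z: "Z \<noteq> A" "W \<noteq> A" "Z \<noteq> W" using ZW by (auto simp: doubleton_eq_iff)
  have "(\<exists>\<psi>. solves p q \<psi> (shift_conj_eqs Z W 0 1 2 3) \<and> \<psi> 0 = x \<and> \<psi> 1 = y) \<longleftrightarrow> shift_conj_eq Z x y"
  proof
    assume "\<exists>\<psi>. solves p q \<psi> (shift_conj_eqs Z W 0 1 2 3) \<and> \<psi> 0 = x \<and> \<psi> 1 = y"
    then obtain \<psi> where \<psi>: "solves p q \<psi> (shift_conj_eqs Z W 0 1 2 3)" "\<psi> 0 = x" "\<psi> 1 = y"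
      by blast
    then have "\<forall>u. \<psi> u \<in> carrier GG" by (simp add: solves_def)
    then show "shift_conj_eq Z x y"
      using shift_conj_eq_if_solves[OF _ Z \<psi>(1)] \<psi>(2,3) by simp
  next
    assume "shift_conj_eq Z x y"
    then obtain j j' :: nat where eq: "a_conj (gZ Z [^]\<^bsub>GG\<^esub> j \<cdot> x) = a_conj (gZ Z [^]\<^bsub>GG\<^esub> j' \<cdot> y)"
      by (auto simp: shift_conj_eq_def)
    define \<psi> :: "nat \<Rightarrow> word set"
      where "\<psi> = (\<lambda>_. gone)(0 := x, 1 := y, 2 := gZ Z [^]\<^bsub>GG\<^esub> j, 3 := gZ Z [^]\<^bsub>GG\<^esub> j')"
    have "\<forall>u. \<psi> u \<in> carrier GG" using xy Mon_st_subset_carrier by (auto simp: \<psi>_def)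
    then have "solves p q \<psi> (shift_conj_eqs Z W 0 1 2 3)"
      using solves_shift_conj_eqs[OF _ Z] eq by (auto simp: \<psi>_def)
    then show "\<exists>\<psi>. solves p q \<psi> (shift_conj_eqs Z W 0 1 2 3) \<and> \<psi> 0 = x \<and> \<psi> 1 = y"
      by (auto simp: \<psi>_def)
  qed
  then show ?thesis using shift_conj_eq_iff[OF ZW xy] by simp
qed

text \<open>\<open>expsum S x = expsum T y\<close> is witnessed by \<open>w = (s t)\<^sup>n\<close>, whose two exponent sums agree:
  \<open>x\<close> and \<open>w\<close> are related through powers of \<open>t\<close>, and \<open>w\<close> and \<open>y\<close> through powers of \<open>s\<close>.\<close>

lemma solvable_expsum_S_T_eqs_iff:
  assumes xy: "x \<in> Mon_st" "y \<in> Mon_st"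
  shows "(\<exists>\<psi>. solves p q \<psi> expsum_S_T_eqs \<and> \<psi> 0 = x \<and> \<psi> 1 = y) \<longleftrightarrow> expsum S x = expsum T y"
proof -
  let ?w = "\<lambda>n::nat. hxy S T 1 [^]\<^bsub>GG\<^esub> n"
  have rel: "shift_conj_eq T x (?w n) \<and> shift_conj_eq S (?w n) y \<longleftrightarrow>
      expsum S x = int n \<and> int n = expsum T y" for n
    using shift_conj_eq_iff[of T S, OF insert_commute xy(1) hxy_pow_in_Mon_st]
      shift_conj_eq_iff[of S T, OF refl hxy_pow_in_Mon_st xy(2)]
    by (simp add: expsum_hxy_pow)
  show ?thesis
  proof
    assume "\<exists>\<psi>. solves p q \<psi> expsum_S_T_eqs \<and> \<psi> 0 = x \<and> \<psi> 1 = y"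
    then obtain \<psi> where \<psi>: "solves p q \<psi> expsum_S_T_eqs" "\<psi> 0 = x" "\<psi> 1 = y" by blast
    moreover from \<psi>(1) have carrier: "\<forall>u. \<psi> u \<in> carrier GG" by (simp add: solves_def)
    ultimately obtain n where "\<psi> 2 = ?w n" using solves_expsum_S_T_eqs by blast
    with \<psi> have "shift_conj_eq T x (?w n) \<and> shift_conj_eq S (?w n) y"
      using shift_conj_eq_if_solves[OF carrier, of T S 0 2 3 4]
        shift_conj_eq_if_solves[OF carrier, of S T 2 1 5 6]
      by (simp add: expsum_S_T_eqs_def solves_append)
    then show "expsum S x = expsum T y" using rel by simp
  next
    assume eq: "expsum S x = expsum T y"
    obtain n :: nat where "expsum S x = int n"
      using a_conj_Mon_st[OF xy(1)] by auto
    then have "shift_conj_eq T x (?w n)" "shift_conj_eq S (?w n) y"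
      using rel[of n] eq by simp_all
    then obtain j1 j1' j2 j2' :: nat where
      eq1: "a_conj (gZ T [^]\<^bsub>GG\<^esub> j1 \<cdot> x) = a_conj (gZ T [^]\<^bsub>GG\<^esub> j1' \<cdot> ?w n)" and
      eq2: "a_conj (gZ S [^]\<^bsub>GG\<^esub> j2 \<cdot> ?w n) = a_conj (gZ S [^]\<^bsub>GG\<^esub> j2' \<cdot> y)"
      unfolding shift_conj_eq_def by blast
    define \<psi> :: "nat \<Rightarrow> word set" where "\<psi> = (\<lambda>_. gone)(0 := x, 1 := y, 2 := ?w n,
      3 := gZ T [^]\<^bsub>GG\<^esub> j1, 4 := gZ T [^]\<^bsub>GG\<^esub> j1', 5 := gZ S [^]\<^bsub>GG\<^esub> j2, 6 := gZ S [^]\<^bsub>GG\<^esub> j2')"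
    have carrier: "\<forall>u. \<psi> u \<in> carrier GG" using xy Mon_st_subset_carrier by (auto simp: \<psi>_def)
    have "solves p q \<psi> expsum_S_T_eqs"
      unfolding solves_expsum_S_T_eqs[OF carrier] using eq1 eq2 by (simp add: \<psi>_def) blast
    then show "\<exists>\<psi>. solves p q \<psi> expsum_S_T_eqs \<and> \<psi> 0 = x \<and> \<psi> 1 = y"
      by (auto simp: \<psi>_def)
  qed
qed

lemma eq_definable_expsum_eq:
  assumes "eq_definable p q n E" "k < n" "l < n" "\<forall>e\<in>E. e ! k \<in> Mon_st \<and> e ! l \<in> Mon_st"
  shows "eq_definable p q n {e \<in> E. expsum S (e ! k) = expsum T (e ! l)} \<and>
    eq_definable p q n {e \<in> E. expsum S (e ! k) = expsum S (e ! l)} \<and>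
    eq_definable p q n {e \<in> E. expsum T (e ! k) = expsum T (e ! l)}"
proof (intro conjI)
  have "\<forall>f\<in>set expsum_S_T_eqs. consts_ok p q f"
    using consts_ok_Mon_hxy_eqs consts_ok_shift_conj_eqs by (auto simp: expsum_S_T_eqs_def)
  then show "eq_definable p q n {e \<in> E. expsum S (e ! k) = expsum T (e ! l)}"
    by (rule eq_definable_restrict_iff[OF assms(1-3)])
      (use assms(4) solvable_expsum_S_T_eqs_iff in simp_all)
  show "eq_definable p q n {e \<in> E. expsum S (e ! k) = expsum S (e ! l)}"
    by (rule eq_definable_restrict_iff[OF assms(1-3) consts_ok_shift_conj_eqs[of T S 0 1 2 3]])
      (use assms(4) solvable_shift_conj_eqs_iff[of T S, OF insert_commute] in simp)
  show "eq_definable p q n {e \<in> E. expsum T (e ! k) = expsum T (e ! l)}"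
    by (rule eq_definable_restrict_iff[OF assms(1-3) consts_ok_shift_conj_eqs[of S T 0 1 2 3]])
      (use assms(4) solvable_shift_conj_eqs_iff[of S T, OF refl] in simp)
qed

end

theorem lemma3p3:
  fixes p q :: nat
  assumes "prime p" and "prime q" and "p \<noteq> q"
  defines "G \<equiv> Gpres p q" and "s \<equiv> gs p q" and "t \<equiv> gt p q"
  shows "eq_definable p q 1 {[g] | g. g \<in> mon_gen G {s}} \<and>
         eq_definable p q 1 {[g] | g. g \<in> mon_gen G {t}} \<and>
         eq_definable p q 2
           {[g, t [^]\<^bsub>G\<^esub> i] | g (i :: nat). g \<in> mon_gen G {s \<otimes>\<^bsub>G\<^esub> (t [^]\<^bsub>G\<^esub> i)}} \<and>
         (\<forall>n E k l. eq_definable p q n E \<longrightarrow> k < n \<longrightarrow> l < n \<longrightarrow> k \<noteq> l \<longrightarrow>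
           (\<forall>e\<in>E. e ! k \<in> mon_gen G {s, t} \<and> e ! l \<in> mon_gen G {s, t}) \<longrightarrow>
           eq_definable p q n {e \<in> E. expsum S (e ! k) = expsum T (e ! l)} \<and>
           eq_definable p q n {e \<in> E. expsum S (e ! k) = expsum S (e ! l)} \<and>
           eq_definable p q n {e \<in> E. expsum T (e ! k) = expsum T (e ! l)})"
proof -
  interpret distinct_primes p q
    using assms(1-3) by unfold_locales
  have st: "s = gZ S" "t = gZ T"
    by (simp_all add: s_def t_def gs_def gt_def)
  show ?thesis
    unfolding G_def st
    using eq_definable_Mon_hxy[of S T 0] eq_definable_Mon_hxy[of T S 0]
      eq_definable_Mon_s_stable_pow eq_definable_expsum_eq
    by simp
qed

end
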